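(* Let $x_{\max}>0$, $T>0$, $\Omega=(0,x_{\max})$, and let $r,\sigma:[0,T]\to\mathbb{R}$ be sufficiently smooth with $0\le r(t)\le \bar r$ and $\underline{\sigma}\le\sigma(t)\le\bar\sigma$ for all $t\in[0,T]$, for some constants $\bar r$, $\underline{\sigma}$, $\bar\sigma$. Put $\beta=\sup_{t\in[0,T]}\sigma^2(t)$, $a(t)=\tfrac12\sigma^2(t)$, $b(t)=r(t)-\sigma^2(t)$, $c(t)=2r(t)+\beta-\sigma^2(t)$, and for $t\in[0,T]$ and $u,v\in H^1_{0,\omega}(\Omega)$ define $$A(u,v;t)=\big(a(t)x^2u'+b(t)xu,\,v'\big)+\big(c(t)u,\,v\big),$$ where $(\cdot,\cdot)$ is the $L^2(\Omega)$ inner product. Then there exist positive constants $C$ and $M$ such that for all $v,z\in H^1_{0,\omega}(\Omega)$, $$A(v,v;t)\ge C\,\|v\|_{1,\omega}^2,\qquad A(z,v;t)\le M\,\|z\|_{1,\omega}\,\|v\|_{1,\omega}.$$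
   Context: The weighted space $L^2_\omega(\Omega)$ consists of measurable $v$ with $\|v\|_\omega=\big(\int_\Omega x^2v^2\,dx\big)^{1/2}<\infty$. The weighted Sobolev space is $H^1_\omega(\Omega)=\{v\in L^2(\Omega):$ there is $g\in L^2_\omega(\Omega)$ with $\int_\Omega v\varphi'=-\int_\Omega g\varphi$ for all $\varphi\in C_c(\Omega)\}$, with $v'=g$ the weak derivative, and $H^1_{0,\omega}(\Omega)=\{v\in H^1_\omega(\Omega): v|_{\partial\Omega}=0\}$. Its norm is $\|v\|_{1,\omega}=\big(\|v\|_{L^2(\Omega)}^2+\|v'\|_\omega^2\big)^{1/2}=\big((v,v)+(x^2v',v')\big)^{1/2}$. *)

theory Defs
  imports "HOL-Analysis.Analysis"
begin

definition Omega :: "real \<Rightarrow> real set" where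
  "Omega xm = {0<..<xm}"

definition L2 :: "real \<Rightarrow> (real \<Rightarrow> real) \<Rightarrow> bool" where
  "L2 xm v \<longleftrightarrow> set_borel_measurable lborel (Omega xm) v \<and>
     set_integrable lborel (Omega xm) (\<lambda>x. (v x)^2)"

definition L2w :: "real \<Rightarrow> (real \<Rightarrow> real) \<Rightarrow> bool" where
  "L2w xm g \<longleftrightarrow> set_borel_measurable lborel (Omega xm) g \<and>
     set_integrable lborel (Omega xm) (\<lambda>x. x^2 * (g x)^2)"

definition smooth_fun :: "(real \<Rightarrow> real) \<Rightarrow> bool" where
  "smooth_fun \<phi> \<longleftrightarrow> (\<forall>n x. ((deriv ^^ n) \<phi>) differentiable (at x))"

definition test_fun :: "real \<Rightarrow> (real \<Rightarrow> real) \<Rightarrow> bool" where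
  "test_fun xm \<phi> \<longleftrightarrow> smooth_fun \<phi> \<and>
     (\<exists>a b. 0 < a \<and> a \<le> b \<and> b < xm \<and> (\<forall>x. x \<notin> {a..b} \<longrightarrow> \<phi> x = 0))"

definition weak_deriv :: "real \<Rightarrow> (real \<Rightarrow> real) \<Rightarrow> (real \<Rightarrow> real) \<Rightarrow> bool" where
  "weak_deriv xm v g \<longleftrightarrow> (\<forall>\<phi>. test_fun xm \<phi> \<longrightarrow>
     (LINT x:Omega xm|lborel. v x * deriv \<phi> x) = - (LINT x:Omega xm|lborel. g x * \<phi> x))"

definition H1w :: "real \<Rightarrow> (real \<Rightarrow> real) \<Rightarrow> (real \<Rightarrow> real) \<Rightarrow> bool" where
  "H1w xm v g \<longleftrightarrow> L2 xm v \<and> L2w xm g \<and> weak_deriv xm v g"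

text \<open>v in H^1_{0,omega}(Omega) with weak derivative g: the continuous representative
  of v vanishes on the boundary {0, xm}.\<close>
definition H10w :: "real \<Rightarrow> (real \<Rightarrow> real) \<Rightarrow> (real \<Rightarrow> real) \<Rightarrow> bool" where
  "H10w xm v g \<longleftrightarrow> H1w xm v g \<and>
     (\<exists>w. (AE x in lborel. x \<in> Omega xm \<longrightarrow> w x = v x) \<and> continuous_on (Omega xm) w \<and>
          (w \<longlongrightarrow> 0) (at_right 0) \<and> (w \<longlongrightarrow> 0) (at_left xm))"

definition norm1w :: "real \<Rightarrow> (real \<Rightarrow> real) \<Rightarrow> (real \<Rightarrow> real) \<Rightarrow> real" where
  "norm1w xm v g = sqrt ((LINT x:Omega xm|lborel. (v x)^2) + (LINT x:Omega xm|lborel. x^2 * (g x)^2))"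

text \<open>The bilinear form A(z,v;t), with gz, gv the weak derivatives of z, v.\<close>
definition bilinA :: "real \<Rightarrow> (real \<Rightarrow> real) \<Rightarrow> (real \<Rightarrow> real) \<Rightarrow> real \<Rightarrow> real
     \<Rightarrow> (real \<Rightarrow> real) \<Rightarrow> (real \<Rightarrow> real) \<Rightarrow> (real \<Rightarrow> real) \<Rightarrow> (real \<Rightarrow> real) \<Rightarrow> real" where
  "bilinA xm r \<sigma> T t z gz v gv =
    (let \<beta> = (SUP s\<in>{0..T}. (\<sigma> s)^2);
         a = (\<sigma> t)^2 / 2;
         b = r t - (\<sigma> t)^2;
         c = 2 * r t + \<beta> - (\<sigma> t)^2
     in (LINT x:Omega xm|lborel. (a * x^2 * gz x + b * x * z x) * gv x)
        + (LINT x:Omega xm|lborel. c * z x * v x))"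

end

theory Submission
  imports Defs "HOL-Computational_Algebra.Polynomial"
begin

(* With a = sigma^2/2, b = r - sigma^2 and c = 2 r + beta - sigma^2 the form reads
   A(z,v) = a (x z', x v') + b (z, x v') + c (z, v). All of z, v, x z', x v' are square
   integrable, so boundedness is Cauchy-Schwarz. For coercivity, integrating x (v^2)'/2 by parts
   gives (v, x v') = -|v|^2/2, the boundary terms x v(x)^2 vanishing at 0 and at xmax; hence
   A(v,v) = a |x v'|^2 + (c - b/2) |v|^2 with c - b/2 = 3r/2 + beta - sigma^2/2 >= sigma^2/2.
   The integration by parts needs the continuous representative of v to be a primitive of the
   weak derivative. This follows by testing the weak derivative against smooth plateau
   functions, built from exp(-1/x), that converge to the indicator of an interval. *)

section \<open>Smooth plateau functions\<close>

text \<open>A chain of everywhere-existing derivatives, which is easier to build up by closure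
  properties than the iterated deriv in smooth_fun.\<close>
definition infinitely_differentiable :: "(real \<Rightarrow> real) \<Rightarrow> bool" where
  "infinitely_differentiable f \<longleftrightarrow>
     (\<exists>F. F 0 = f \<and> (\<forall>n x. (F n has_real_derivative F (Suc n) x) (at x)))"

lemma infinitely_differentiable_imp_smooth_fun:
  assumes "infinitely_differentiable f"
  shows "smooth_fun f"
proof -
  obtain F where F0: "F 0 = f" and FD: "\<And>n x. (F n has_real_derivative F (Suc n) x) (at x)"
    using assms unfolding infinitely_differentiable_def by blast
  have "(deriv ^^ n) f = F n" for n
    by (induction n) (auto simp: F0 FD intro!: ext DERIV_imp_deriv)
  then show ?thesis
    unfolding smooth_fun_def using FD real_differentiable_def by metis
qed

lemma infinitely_differentiable_imp_continuous_on:
  assumes "infinitely_differentiable f"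
  shows "continuous_on S f"
proof -
  obtain F where "F 0 = f" "\<And>n x. (F n has_real_derivative F (Suc n) x) (at x)"
    using assms unfolding infinitely_differentiable_def by blast
  then show ?thesis
    by (metis DERIV_isCont continuous_at_imp_continuous_on)
qed

lemma infinitely_differentiable_antiderivative:
  assumes "infinitely_differentiable f" "\<And>x. (F has_real_derivative f x) (at x)"
  shows "infinitely_differentiable F"
proof -
  obtain G where G0: "G 0 = f" and GD: "\<And>n x. (G n has_real_derivative G (Suc n) x) (at x)"
    using assms(1) unfolding infinitely_differentiable_def by blast
  have "(case_nat F G n has_real_derivative case_nat F G (Suc n) x) (at x)" for n x
    using assms(2) GD G0 by (cases n) auto
  then show ?thesis
    unfolding infinitely_differentiable_def by (intro exI[of _ "case_nat F G"]) simp
qed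

lemma infinitely_differentiable_compose_affine:
  assumes "infinitely_differentiable f"
  shows "infinitely_differentiable (\<lambda>x. f (c * x + d))"
proof -
  obtain F where F0: "F 0 = f" and FD: "\<And>n x. (F n has_real_derivative F (Suc n) x) (at x)"
    using assms unfolding infinitely_differentiable_def by blast
  define G where "G n x = c ^ n * F n (c * x + d)" for n x
  have "(G n has_real_derivative G (Suc n) x) (at x)" for n x
  proof -
    have "((\<lambda>x. F n (c * x + d)) has_real_derivative F (Suc n) (c * x + d) * c) (at x)"
      by (rule DERIV_chain2[OF FD]) (auto intro!: derivative_eq_intros)
    then show ?thesis
      unfolding G_def by (auto intro!: derivative_eq_intros)
  qed
  moreover have "G 0 = (\<lambda>x. f (c * x + d))"
    by (simp add: fun_eq_iff G_def F0)
  ultimately show ?thesis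
    unfolding infinitely_differentiable_def by blast
qed

lemma infinitely_differentiable_lincomb:
  assumes "infinitely_differentiable f" "infinitely_differentiable g"
  shows "infinitely_differentiable (\<lambda>x. a * f x + b * g x)"
proof -
  obtain F where F0: "F 0 = f" and FD: "\<And>n x. (F n has_real_derivative F (Suc n) x) (at x)"
    using assms(1) unfolding infinitely_differentiable_def by blast
  obtain G where G0: "G 0 = g" and GD: "\<And>n x. (G n has_real_derivative G (Suc n) x) (at x)"
    using assms(2) unfolding infinitely_differentiable_def by blast
  have "((\<lambda>x. a * F n x + b * G n x) has_real_derivative a * F (Suc n) x + b * G (Suc n) x) (at x)"
    for n x by (intro DERIV_add DERIV_cmult FD GD)
  then show ?thesis
    unfolding infinitely_differentiable_def using F0 G0
    by (intro exI[of _ "\<lambda>n x. a * F n x + b * G n x"]) auto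
qed

lemma infinitely_differentiable_cmult:
  "infinitely_differentiable f \<Longrightarrow> infinitely_differentiable (\<lambda>x. a * f x)"
  using infinitely_differentiable_lincomb[of f f a 0] by simp

lemma infinitely_differentiable_mult:
  assumes "infinitely_differentiable f" "infinitely_differentiable g"
  shows "infinitely_differentiable (\<lambda>x. f x * g x)"
proof -
  obtain F where F0: "F 0 = f" and FD: "\<And>n x. (F n has_real_derivative F (Suc n) x) (at x)"
    using assms(1) unfolding infinitely_differentiable_def by blast
  obtain G where G0: "G 0 = g" and GD: "\<And>n x. (G n has_real_derivative G (Suc n) x) (at x)"
    using assms(2) unfolding infinitely_differentiable_def by blast
  \<comment> \<open>Leibniz rule\<close>
  define H where "H n x = (\<Sum>i = 0..n. of_nat (n choose i) * F i x * G (n - i) x)" for n x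
  have "(H n has_real_derivative H (Suc n) x) (at x)" for n x
  proof -
    have binom: "Suc n choose i = (n choose i) + (if i = 0 then 0 else n choose (i - 1))" for i
      by (cases i) auto
    have "(H n has_real_derivative (\<Sum>i = 0..n.
            of_nat (n choose i) * (F (Suc i) x * G (n - i) x + G (Suc (n - i)) x * F i x))) (at x)"
      unfolding H_def
      by (rule DERIV_sum, subst mult.assoc, rule DERIV_cmult, rule DERIV_mult'[THEN DERIV_cong],
          rule FD, rule GD) (simp add: Suc_diff_le algebra_simps)
    also have "(\<Sum>i = 0..n.
            of_nat (n choose i) * (F (Suc i) x * G (n - i) x + G (Suc (n - i)) x * F i x))
        = G 0 x * F (Suc n) x + (\<Sum>i = 0..n. F i x * (of_nat (Suc n choose i) * G (Suc n - i) x))"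
      apply (simp add: binom algebra_simps sum.distrib)
      apply (subst (4) sum_Suc_reindex)
      apply (auto simp: algebra_simps Suc_diff_le intro: sum.cong)
      done
    also have "\<dots> = H (Suc n) x"
      unfolding H_def by (simp add: sum.atLeast0_atMost_Suc algebra_simps)
    finally show ?thesis .
  qed
  moreover have "H 0 = (\<lambda>x. f x * g x)"
    by (simp add: fun_eq_iff H_def F0 G0)
  ultimately show ?thesis
    unfolding infinitely_differentiable_def by blast
qed

text \<open>On \<open>x > 0\<close> the \<open>n\<close>-th derivative of \<open>exp (-1/x)\<close> is \<open>p\<^sub>n (1/x) exp (-1/x)\<close> with
  \<open>p\<^sub>n\<^sub>+\<^sub>1 (y) = y\<^sup>2 (p\<^sub>n (y) - p\<^sub>n' (y))\<close>; each of these tends to \<open>0\<close> at \<open>0\<^sup>+\<close>.\<close>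
primrec flat_exp_poly :: "nat \<Rightarrow> real poly" where
  "flat_exp_poly 0 = 1"
| "flat_exp_poly (Suc n) = [:0, 0, 1:] * (flat_exp_poly n - pderiv (flat_exp_poly n))"

definition flat_exp_deriv :: "nat \<Rightarrow> real \<Rightarrow> real" where
  "flat_exp_deriv n x = (if x > 0 then poly (flat_exp_poly n) (1 / x) * exp (- 1 / x) else 0)"

definition flat_exp :: "real \<Rightarrow> real" where
  "flat_exp x = (if x > 0 then exp (- 1 / x) else 0)"

lemma tendsto_poly_times_exp_neg_at_top:
  "((\<lambda>y. poly (p :: real poly) y * exp (- y)) \<longlongrightarrow> 0) at_top"
proof -
  have "((\<lambda>y. \<Sum>i\<le>degree p. coeff p i * (y ^ i / exp y)) \<longlongrightarrow> (\<Sum>i\<le>degree p. coeff p i * 0)) at_top"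
    by (intro tendsto_sum tendsto_mult tendsto_const tendsto_power_div_exp_0)
  moreover have "poly p y * exp (- y) = (\<Sum>i\<le>degree p. coeff p i * (y ^ i / exp y))" for y
    by (simp add: poly_altdef sum_distrib_right exp_minus divide_inverse mult.assoc)
  ultimately show ?thesis
    by simp
qed

lemma flat_exp_deriv_DERIV_pos:
  assumes "x > 0"
  shows "(flat_exp_deriv n has_real_derivative flat_exp_deriv (Suc n) x) (at x)"
proof -
  let ?p = "flat_exp_poly n"
  have "((\<lambda>x. poly ?p (1 / x) * exp (- 1 / x)) has_real_derivative
      poly (pderiv ?p) (1 / x) * (- 1 / x\<^sup>2) * exp (- 1 / x) + exp (- 1 / x) * (1 / x\<^sup>2) * poly ?p (1 / x)) (at x)"
    using assms
    by (intro DERIV_mult DERIV_chain2[OF poly_DERIV] DERIV_chain2[OF DERIV_exp])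
      (auto intro!: derivative_eq_intros simp: power2_eq_square field_simps)
  also have "poly (pderiv ?p) (1 / x) * (- 1 / x\<^sup>2) * exp (- 1 / x) + exp (- 1 / x) * (1 / x\<^sup>2) * poly ?p (1 / x)
      = flat_exp_deriv (Suc n) x"
    using assms by (simp add: flat_exp_deriv_def algebra_simps power2_eq_square)
  finally show ?thesis
    by (rule has_field_derivative_transform_within_open[where S = "{0<..}"])
      (use assms in \<open>auto simp: flat_exp_deriv_def\<close>)
qed

lemma flat_exp_deriv_DERIV_0:
  "(flat_exp_deriv n has_real_derivative flat_exp_deriv (Suc n) 0) (at 0)"
proof -
  have "((\<lambda>y. poly (pCons 0 (flat_exp_poly n)) y * exp (- y)) \<longlongrightarrow> 0) at_top"
    by (rule tendsto_poly_times_exp_neg_at_top)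
  then have "((\<lambda>y. poly (pCons 0 (flat_exp_poly n)) (inverse y) * exp (- inverse y)) \<longlongrightarrow> 0) (at_right 0)"
    by (rule filterlim_compose) (rule filterlim_inverse_at_top_right)
  then have right: "((\<lambda>y. (flat_exp_deriv n y - flat_exp_deriv n 0) / (y - 0)) \<longlongrightarrow> 0) (at_right 0)"
    by (rule Lim_transform_eventually)
      (auto simp: eventually_at_right_field flat_exp_deriv_def field_simps intro!: exI[of _ 1])
  have "\<forall>\<^sub>F y in at_left 0. 0 = (flat_exp_deriv n y - flat_exp_deriv n 0) / (y - 0)"
    by (auto simp: eventually_at_left_field flat_exp_deriv_def intro!: exI[of _ "- 1"])
  then have left: "((\<lambda>y. (flat_exp_deriv n y - flat_exp_deriv n 0) / (y - 0)) \<longlongrightarrow> 0) (at_left 0)"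
    by (rule Lim_transform_eventually[OF tendsto_const])
  show ?thesis
    using left right by (simp add: has_field_derivative_iff filterlim_at_split flat_exp_deriv_def)
qed

lemma flat_exp_deriv_DERIV:
  "(flat_exp_deriv n has_real_derivative flat_exp_deriv (Suc n) x) (at x)"
proof -
  consider "x > 0" | "x < 0" | "x = 0"
    by linarith
  then show ?thesis
  proof cases
    case 2
    have "((\<lambda>x. 0) has_real_derivative flat_exp_deriv (Suc n) x) (at x)"
      using 2 by (simp add: flat_exp_deriv_def)
    then show ?thesis
      by (rule has_field_derivative_transform_within_open[where S = "{..<0}"])
        (use 2 in \<open>auto simp: flat_exp_deriv_def\<close>)
  qed (use flat_exp_deriv_DERIV_pos flat_exp_deriv_DERIV_0 in auto)
qed

lemma infinitely_differentiable_flat_exp: "infinitely_differentiable flat_exp"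
proof -
  have "flat_exp_deriv 0 = flat_exp"
    by (simp add: fun_eq_iff flat_exp_deriv_def flat_exp_def)
  then show ?thesis
    unfolding infinitely_differentiable_def using flat_exp_deriv_DERIV by blast
qed

definition bump :: "real \<Rightarrow> real" where
  "bump x = flat_exp x * flat_exp (1 - x)"

definition bump_integral :: "real \<Rightarrow> real" where
  "bump_integral y = integral {-1..y} bump"

definition bump_mass :: real where
  "bump_mass = bump_integral 1"

lemma infinitely_differentiable_bump: "infinitely_differentiable bump"
proof -
  have "infinitely_differentiable (\<lambda>x. flat_exp ((- 1) * x + 1))"
    by (rule infinitely_differentiable_compose_affine[OF infinitely_differentiable_flat_exp])
  then show ?thesis
    unfolding bump_def[abs_def]
    by (intro infinitely_differentiable_mult infinitely_differentiable_flat_exp) simp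
qed

lemma continuous_on_bump: "continuous_on S bump"
  by (rule infinitely_differentiable_imp_continuous_on[OF infinitely_differentiable_bump])

lemma bump_integrable: "bump integrable_on {a..b}"
  by (rule integrable_continuous_real[OF continuous_on_bump])

lemma bump_nonneg: "bump x \<ge> 0"
  by (simp add: bump_def flat_exp_def)

lemma bump_eq_0: "x \<le> 0 \<or> 1 \<le> x \<Longrightarrow> bump x = 0"
  by (auto simp: bump_def flat_exp_def)

lemma bump_pos: "0 < x \<Longrightarrow> x < 1 \<Longrightarrow> bump x > 0"
  by (simp add: bump_def flat_exp_def)

lemma bump_integral_eq_0:
  assumes "y \<le> 0"
  shows "bump_integral y = 0"
proof -
  have "integral {-1..y} bump = integral {-1..y} (\<lambda>_. 0)"
    by (rule integral_cong) (use assms in \<open>simp add: bump_eq_0\<close>)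
  then show ?thesis
    by (simp add: bump_integral_def)
qed

lemma bump_integral_eq_mass:
  assumes "1 \<le> y"
  shows "bump_integral y = bump_mass"
proof -
  have "integral {1..y} bump = integral {1..y} (\<lambda>_. 0)"
    by (rule integral_cong) (use assms in \<open>simp add: bump_eq_0\<close>)
  moreover have "integral {-1..1} bump + integral {1..y} bump = integral {-1..y} bump"
    by (rule Henstock_Kurzweil_Integration.integral_combine) (use assms bump_integrable in auto)
  ultimately show ?thesis
    by (simp add: bump_integral_def bump_mass_def)
qed

lemma bump_integral_DERIV: "(bump_integral has_real_derivative bump y) (at y)"
proof (cases "y < 0")
  case True
  have "((\<lambda>x. 0) has_real_derivative bump y) (at y)"
    using True by (simp add: bump_eq_0)
  then show ?thesis
    by (rule has_field_derivative_transform_within_open[where S = "{..<0}"])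
      (use True in \<open>auto simp: bump_integral_eq_0\<close>)
next
  case False
  have "((\<lambda>x. integral {-1..x} bump) has_real_derivative bump y) (at y within {-1..y + 1})"
    using False by (intro integral_has_real_derivative continuous_on_bump) simp
  moreover have "y \<in> interior {-1..y + 1}"
    using False by simp
  ultimately show ?thesis
    unfolding bump_integral_def[abs_def] using at_within_interior by metis
qed

lemma bump_mass_pos: "bump_mass > 0"
proof -
  have "bump_mass \<ge> 0"
    unfolding bump_mass_def bump_integral_def
    by (rule integral_nonneg[OF bump_integrable]) (simp add: bump_nonneg)
  moreover have "bump_mass \<noteq> 0"
  proof
    assume "bump_mass = 0"
    then have "(bump has_integral 0) (cbox (-1) 1)"
      using bump_integrable[of "-1" 1]
      by (simp add: bump_mass_def bump_integral_def has_integral_integral cbox_interval)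
    then have "bump (1/2) = 0"
      by (rule has_integral_0_cbox_imp_0[rotated 2])
        (auto simp: box_real cbox_interval bump_nonneg continuous_on_bump)
    with bump_pos[of "1/2"] show False
      by simp
  qed
  ultimately show ?thesis
    by simp
qed

lemma bump_integral_bounds: "0 \<le> bump_integral y \<and> bump_integral y \<le> bump_mass"
proof (cases "0 < y \<and> y < 1")
  case True
  have "0 \<le> bump_integral y"
    unfolding bump_integral_def by (rule integral_nonneg[OF bump_integrable]) (simp add: bump_nonneg)
  moreover have "bump_integral y \<le> bump_mass"
    unfolding bump_integral_def bump_mass_def
    by (rule integral_subset_le) (use True in \<open>auto simp: bump_integrable bump_nonneg\<close>)
  ultimately show ?thesis
    by simp
next
  case False
  then show ?thesis
    using bump_integral_eq_0 bump_integral_eq_mass bump_mass_pos by force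
qed

text \<open>\<open>smooth_step c h\<close> rises from \<open>0\<close> on \<open>(-\<infinity>, c - h]\<close> to \<open>1\<close> on \<open>[c, \<infinity>)\<close>;
  its derivative \<open>step_kernel c h\<close> is a probability density supported in \<open>[c - h, c]\<close>.\<close>
definition smooth_step :: "real \<Rightarrow> real \<Rightarrow> real \<Rightarrow> real" where
  "smooth_step c h x = bump_integral ((x - c) / h + 1) / bump_mass"

definition step_kernel :: "real \<Rightarrow> real \<Rightarrow> real \<Rightarrow> real" where
  "step_kernel c h x = bump ((x - c) / h + 1) / (h * bump_mass)"

lemma infinitely_differentiable_smooth_step: "infinitely_differentiable (smooth_step c h)"
proof -
  have "infinitely_differentiable bump_integral"
    by (rule infinitely_differentiable_antiderivative[OF infinitely_differentiable_bump bump_integral_DERIV])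
  then have "infinitely_differentiable (\<lambda>x. bump_integral ((1 / h) * x + (1 - c / h)))"
    by (rule infinitely_differentiable_compose_affine)
  then have "infinitely_differentiable (\<lambda>x. (1 / bump_mass) * bump_integral ((1 / h) * x + (1 - c / h)))"
    by (rule infinitely_differentiable_cmult)
  moreover have arg: "(1 / h) * x + (1 - c / h) = (x - c) / h + 1" for x
    by (simp add: diff_divide_distrib)
  ultimately show ?thesis
    unfolding arg smooth_step_def[abs_def] by simp
qed

lemma smooth_step_DERIV:
  assumes "h > 0"
  shows "(smooth_step c h has_real_derivative step_kernel c h x) (at x)"
proof -
  have "((\<lambda>x. (x - c) / h + 1) has_real_derivative 1 / h) (at x)"
    using assms by (auto intro!: derivative_eq_intros)
  from DERIV_chain2[OF bump_integral_DERIV this]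
  have "((\<lambda>x. bump_integral ((x - c) / h + 1) / bump_mass) has_real_derivative
      bump ((x - c) / h + 1) * (1 / h) / bump_mass) (at x)"
    by (rule DERIV_cdivide)
  then show ?thesis
    unfolding smooth_step_def[abs_def] step_kernel_def by simp
qed

lemma step_argument_bounds:
  fixes c h x :: real
  assumes "h > 0"
  shows "x \<le> c - h \<Longrightarrow> (x - c) / h + 1 \<le> 0" and "c \<le> x \<Longrightarrow> 1 \<le> (x - c) / h + 1"
proof -
  show "(x - c) / h + 1 \<le> 0" if "x \<le> c - h"
  proof -
    have "(x - c) / h \<le> - 1"
      using assms that by (simp add: divide_le_eq)
    then show ?thesis
      by simp
  qed
  show "1 \<le> (x - c) / h + 1" if "c \<le> x"
    using assms that by simp
qed

lemma smooth_step_eq_0: "h > 0 \<Longrightarrow> x \<le> c - h \<Longrightarrow> smooth_step c h x = 0"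
  by (simp add: smooth_step_def bump_integral_eq_0 step_argument_bounds)

lemma smooth_step_eq_1: "h > 0 \<Longrightarrow> c \<le> x \<Longrightarrow> smooth_step c h x = 1"
  using bump_mass_pos by (simp add: smooth_step_def bump_integral_eq_mass step_argument_bounds)

lemma smooth_step_bounds: "0 \<le> smooth_step c h x \<and> smooth_step c h x \<le> 1"
  using bump_integral_bounds[of "(x - c) / h + 1"] bump_mass_pos
  by (simp add: smooth_step_def divide_le_eq)

lemma step_kernel_nonneg: "h > 0 \<Longrightarrow> step_kernel c h x \<ge> 0"
  using bump_mass_pos bump_nonneg by (simp add: step_kernel_def)

lemma step_kernel_eq_0: "h > 0 \<Longrightarrow> x \<le> c - h \<or> c \<le> x \<Longrightarrow> step_kernel c h x = 0"
  by (auto simp: step_kernel_def bump_eq_0 step_argument_bounds)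

lemma continuous_on_step_kernel: "h > 0 \<Longrightarrow> continuous_on S (step_kernel c h)"
  unfolding step_kernel_def[abs_def] using bump_mass_pos
  by (intro continuous_intros continuous_on_compose2[OF continuous_on_bump[of UNIV]]) auto

lemma step_kernel_has_integral_1:
  assumes "h > 0" "a \<le> c - h" "c \<le> b"
  shows "(step_kernel c h has_integral 1) {a..b}"
proof -
  have "(step_kernel c h has_integral (smooth_step c h b - smooth_step c h a)) {a..b}"
    using assms smooth_step_DERIV[OF assms(1)]
    by (intro fundamental_theorem_of_calculus)
      (auto simp: has_real_derivative_iff_has_vector_derivative[symmetric] has_field_derivative_at_within)
  then show ?thesis
    using assms smooth_step_eq_0 smooth_step_eq_1 by simp
qed

lemma abs_integral_times_step_kernel_diff_le:
  fixes w :: "real \<Rightarrow> real"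
  assumes h: "h > 0" and ab: "a \<le> c - h" "c \<le> b" and w: "continuous_on {a..b} w"
    and close: "\<And>x. x \<in> {c - h..c} \<Longrightarrow> \<bar>w x - w p\<bar> \<le> e"
  shows "\<bar>integral {a..b} (\<lambda>x. w x * step_kernel c h x) - w p\<bar> \<le> e"
proof -
  let ?k = "step_kernel c h"
  have k1: "(?k has_integral 1) {a..b}"
    by (rule step_kernel_has_integral_1[OF h ab])
  have int: "(\<lambda>x. u x * ?k x) integrable_on {a..b}" if "continuous_on {a..b} u" for u
    using that h by (intro integrable_continuous_real continuous_intros continuous_on_step_kernel)
  have "integral {a..b} (\<lambda>x. w x * ?k x) - w p = integral {a..b} (\<lambda>x. (w x - w p) * ?k x)"
    using k1 integral_diff[OF int[OF w] int[of "\<lambda>_. w p"]]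
    by (simp add: left_diff_distrib integral_unique)
  also have "\<bar>\<dots>\<bar> \<le> integral {a..b} (\<lambda>x. e * ?k x)"
  proof -
    have "\<bar>(w x - w p) * ?k x\<bar> \<le> e * ?k x" for x
      using close[of x] step_kernel_nonneg[OF h, of c x] step_kernel_eq_0[OF h, of x c]
      by (cases "x \<in> {c - h..c}") (auto simp: abs_mult mult_right_mono)
    moreover have "(\<lambda>x. (w x - w p) * ?k x) integrable_on {a..b}" "(\<lambda>x. e * ?k x) integrable_on {a..b}"
      using w by (auto intro!: int continuous_intros)
    ultimately show ?thesis
      using integral_norm_bound_integral[of "\<lambda>x. (w x - w p) * ?k x" "{a..b}" "\<lambda>x. e * ?k x"]
      by (simp only: real_norm_def)
  qed
  also have "integral {a..b} (\<lambda>x. e * ?k x) = e"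
    using k1 by (simp add: integral_unique)
  finally show ?thesis .
qed

lemma tendsto_integral_times_step_kernel:
  fixes w :: "real \<Rightarrow> real"
  assumes h: "h \<longlonglongrightarrow> 0" "\<And>n. 0 < h n"
    and c: "\<And>n. a \<le> c n - h n" "\<And>n. c n \<le> b" "\<And>n. p \<in> {c n - h n..c n}"
    and w: "continuous_on {a..b} w"
  shows "(\<lambda>n. integral {a..b} (\<lambda>x. w x * step_kernel (c n) (h n) x)) \<longlonglongrightarrow> w p"
proof (rule LIMSEQ_I)
  fix r :: real
  assume "r > 0"
  have "p \<in> {a..b}"
    using c[of 0] by auto
  with w \<open>r > 0\<close> obtain d where "d > 0"
    and d: "\<And>x. x \<in> {a..b} \<Longrightarrow> dist x p < d \<Longrightarrow> dist (w x) (w p) < r / 2"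
    unfolding continuous_on_iff by (metis half_gt_zero)
  from order_tendstoD(2)[OF h(1) \<open>d > 0\<close>] obtain N where N: "\<And>n. n \<ge> N \<Longrightarrow> h n < d"
    unfolding eventually_sequentially by blast
  have close: "\<bar>integral {a..b} (\<lambda>x. w x * step_kernel (c n) (h n) x) - w p\<bar> \<le> r / 2"
    if "n \<ge> N" for n
  proof (rule abs_integral_times_step_kernel_diff_le[OF h(2) c(1,2) w])
    show "\<bar>w x - w p\<bar> \<le> r / 2" if "x \<in> {c n - h n..c n}" for x
    proof -
      have "dist x p < d"
        using that N[OF \<open>n \<ge> N\<close>] c(3)[of n] by (auto simp: dist_real_def abs_less_iff)
      moreover have "x \<in> {a..b}"
        using that c(1,2)[of n] by auto
      ultimately show ?thesis
        using d by (fastforce simp: dist_real_def)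
    qed
  qed
  have "norm (integral {a..b} (\<lambda>x. w x * step_kernel (c n) (h n) x) - w p) < r" if "n \<ge> N" for n
    using close[OF that] \<open>r > 0\<close> by simp
  then show "\<exists>N. \<forall>n\<ge>N. norm (integral {a..b} (\<lambda>x. w x * step_kernel (c n) (h n) x) - w p) < r"
    by blast
qed

definition plateau :: "real \<Rightarrow> real \<Rightarrow> real \<Rightarrow> real \<Rightarrow> real" where
  "plateau s t h x = smooth_step s h x - smooth_step (t + h) h x"

lemma infinitely_differentiable_plateau: "infinitely_differentiable (plateau s t h)"
  using infinitely_differentiable_lincomb[OF infinitely_differentiable_smooth_step
      infinitely_differentiable_smooth_step, of 1 s h "- 1" "t + h" h]
  by (simp add: plateau_def[abs_def])

lemma continuous_on_plateau: "continuous_on S (plateau s t h)"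
  by (rule infinitely_differentiable_imp_continuous_on[OF infinitely_differentiable_plateau])

lemma deriv_plateau:
  "h > 0 \<Longrightarrow> deriv (plateau s t h) x = step_kernel s h x - step_kernel (t + h) h x"
  unfolding plateau_def[abs_def] by (intro DERIV_imp_deriv DERIV_diff smooth_step_DERIV)

lemma abs_plateau_le_1: "\<bar>plateau s t h x\<bar> \<le> 1"
  using smooth_step_bounds[of s h x] smooth_step_bounds[of "t + h" h x]
  by (auto simp: plateau_def abs_le_iff)

lemma plateau_eq_1: "h > 0 \<Longrightarrow> x \<in> {s..t} \<Longrightarrow> plateau s t h x = 1"
  by (simp add: plateau_def smooth_step_eq_0 smooth_step_eq_1)

lemma plateau_eq_0: "h > 0 \<Longrightarrow> s \<le> t \<Longrightarrow> x \<le> s - h \<or> t + h \<le> x \<Longrightarrow> plateau s t h x = 0"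
  by (auto simp: plateau_def smooth_step_eq_0 smooth_step_eq_1)

lemma test_fun_plateau:
  assumes "h > 0" "0 < s - h" "s \<le> t" "t + h < xm"
  shows "test_fun xm (plateau s t h)"
  unfolding test_fun_def
  using assms plateau_eq_0[OF assms(1,3)]
  by (intro conjI infinitely_differentiable_imp_smooth_fun infinitely_differentiable_plateau
      exI[of _ "s - h"] exI[of _ "t + h"]) auto

lemma tendsto_plateau_indicator:
  assumes h: "h \<longlonglongrightarrow> 0" "\<And>n. 0 < h n" and "s \<le> t"
  shows "(\<lambda>n. plateau s t (h n) x) \<longlonglongrightarrow> indicator {s..t} x"
proof (cases "x \<in> {s..t}")
  case True
  then show ?thesis
    using h(2) by (simp add: plateau_eq_1)
next
  case False
  then have "0 < max (s - x) (x - t)"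
    by auto
  from order_tendstoD(2)[OF h(1) this]
  have "\<forall>\<^sub>F n in sequentially. plateau s t (h n) x = 0"
    by eventually_elim (use False h(2) \<open>s \<le> t\<close> in \<open>auto intro!: plateau_eq_0 simp: max_def split: if_splits\<close>)
  with False show ?thesis
    by (simp add: tendsto_eventually)
qed

lemma tendsto_set_integral_times_plateau:
  fixes g :: "real \<Rightarrow> real"
  assumes g: "set_integrable lborel {s - h0..t + h0} g" and "s \<le> t"
    and h: "h \<longlonglongrightarrow> 0" "\<And>n. 0 < h n" "\<And>n. h n \<le> h0"
  shows "(\<lambda>n. LINT x:{s - h0..t + h0}|lborel. g x * plateau s t (h n) x) \<longlonglongrightarrow> (LINT x:{s..t}|lborel. g x)"
proof -
  let ?J = "{s - h0..t + h0}"
  have "h0 > 0"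
    using h(2,3)[of 0] by linarith
  have gJ: "integrable lborel (\<lambda>x. indicator ?J x * g x)"
    using g by (simp add: set_integrable_def)
  have "(\<lambda>n. LINT x|lborel. indicator ?J x * g x * plateau s t (h n) x)
      \<longlonglongrightarrow> (LINT x|lborel. indicator {s..t} x * g x)"
  proof (rule integral_dominated_convergence[where w = "\<lambda>x. \<bar>indicator ?J x * g x\<bar>"])
    have "set_integrable lborel {s..t} g"
      by (rule set_integrable_subset[OF g]) (use \<open>h0 > 0\<close> in auto)
    then show "(\<lambda>x. indicator {s..t} x * g x) \<in> borel_measurable lborel"
      by (simp add: set_integrable_def borel_measurable_integrable)
    show "(\<lambda>x. indicator ?J x * g x * plateau s t (h n) x) \<in> borel_measurable lborel" for n
      using borel_measurable_integrable[OF gJ]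
        borel_measurable_continuous_onI[OF continuous_on_plateau[of UNIV s t "h n"]]
      by measurable
    show "integrable lborel (\<lambda>x. \<bar>indicator ?J x * g x\<bar>)"
      using gJ by (rule integrable_abs)
    show "AE x in lborel. norm (indicator ?J x * g x * plateau s t (h n) x) \<le> \<bar>indicator ?J x * g x\<bar>" for n
      using abs_plateau_le_1[of s t "h n"] by (auto simp: abs_mult intro!: mult_left_le)
    show "AE x in lborel. (\<lambda>n. indicator ?J x * g x * plateau s t (h n) x) \<longlonglongrightarrow> indicator {s..t} x * g x"
    proof (rule AE_I2)
      fix x
      have "(\<lambda>n. indicator ?J x * g x * plateau s t (h n) x) \<longlonglongrightarrow> indicator ?J x * g x * indicator {s..t} x"
        by (rule tendsto_mult_left[OF tendsto_plateau_indicator[OF h(1,2) \<open>s \<le> t\<close>]])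
      also have "indicator ?J x * g x * indicator {s..t} x = indicator {s..t} x * g x"
        using \<open>h0 > 0\<close> by (auto simp: indicator_def)
      finally show "(\<lambda>n. indicator ?J x * g x * plateau s t (h n) x) \<longlonglongrightarrow> indicator {s..t} x * g x" .
    qed
  qed
  then show ?thesis
    by (simp add: set_lebesgue_integral_def mult.assoc)
qed

section \<open>Continuous representatives of weakly differentiable functions\<close>

lemma set_integral_times_deriv_plateau:
  fixes v w :: "real \<Rightarrow> real"
  assumes vm: "set_borel_measurable lborel (Omega xm) v"
    and ae: "AE x in lborel. x \<in> Omega xm \<longrightarrow> w x = v x"
    and wc: "continuous_on (Omega xm) w"
    and st: "0 < s - h0" "s \<le> t" "t + h0 < xm" and h: "0 < h" "h \<le> h0"
  shows "(LINT x:Omega xm|lborel. v x * deriv (plateau s t h) x)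
    = integral {s - h0..t + h0} (\<lambda>x. w x * step_kernel s h x)
      - integral {s - h0..t + h0} (\<lambda>x. w x * step_kernel (t + h) h x)"
proof -
  define J where "J = {s - h0..t + h0}"
  define D where "D x = step_kernel s h x - step_kernel (t + h) h x" for x
  have JO: "J \<subseteq> Omega xm"
    using st by (auto simp: J_def Omega_def)
  have D_J: "D x = 0" if "x \<notin> J" for x
    using that h st unfolding D_def by (subst (1 2) step_kernel_eq_0) (auto simp: J_def)
  have Dc: "continuous_on S D" for S
    unfolding D_def[abs_def] using h by (intro continuous_intros continuous_on_step_kernel)
  have wJ: "continuous_on J w"
    by (rule continuous_on_subset[OF wc JO])
  have "(LINT x:Omega xm|lborel. v x * deriv (plateau s t h) x) = (LINT x|lborel. indicator (Omega xm) x *\<^sub>R v x * D x)"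
    unfolding set_lebesgue_integral_def deriv_plateau[OF h(1)] D_def by (simp add: mult.assoc)
  also have "\<dots> = (LINT x|lborel. indicator (Omega xm) x *\<^sub>R w x * D x)"
  proof (rule integral_cong_AE)
    show "(\<lambda>x. indicator (Omega xm) x *\<^sub>R v x * D x) \<in> borel_measurable lborel"
      using vm borel_measurable_continuous_onI[OF Dc[of UNIV]]
      unfolding set_borel_measurable_def by measurable
    have "(\<lambda>x. indicator (Omega xm) x *\<^sub>R w x) \<in> borel_measurable borel"
      by (rule borel_measurable_continuous_on_indicator[OF _ wc]) (simp add: Omega_def)
    then show "(\<lambda>x. indicator (Omega xm) x *\<^sub>R w x * D x) \<in> borel_measurable lborel"
      using borel_measurable_continuous_onI[OF Dc[of UNIV]] by measurable
    show "AE x in lborel. indicator (Omega xm) x *\<^sub>R v x * D x = indicator (Omega xm) x *\<^sub>R w x * D x"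
      using ae by eventually_elim (auto simp: indicator_def)
  qed
  also have "\<dots> = (LINT x:J|lborel. w x * D x)"
    unfolding set_lebesgue_integral_def
    by (rule Bochner_Integration.integral_cong) (use JO D_J in \<open>auto simp: indicator_def\<close>)
  also have "\<dots> = integral J (\<lambda>x. w x * D x)"
    using wJ Dc unfolding J_def
    by (intro set_borel_integral_eq_integral(2) borel_integrable_atLeastAtMost' continuous_intros)
  also have "\<dots> = integral J (\<lambda>x. w x * step_kernel s h x) - integral J (\<lambda>x. w x * step_kernel (t + h) h x)"
    unfolding D_def right_diff_distrib using wJ h unfolding J_def
    by (intro integral_diff integrable_continuous_real continuous_intros continuous_on_step_kernel)
  finally show ?thesis
    unfolding J_def .
qed

lemma weak_deriv_plateau_identity:
  fixes v g w :: "real \<Rightarrow> real"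
  assumes wd: "weak_deriv xm v g"
    and vm: "set_borel_measurable lborel (Omega xm) v"
    and ae: "AE x in lborel. x \<in> Omega xm \<longrightarrow> w x = v x"
    and wc: "continuous_on (Omega xm) w"
    and st: "0 < s - h0" "s \<le> t" "t + h0 < xm" and h: "0 < h" "h \<le> h0"
  shows "integral {s - h0..t + h0} (\<lambda>x. w x * step_kernel s h x)
           - integral {s - h0..t + h0} (\<lambda>x. w x * step_kernel (t + h) h x)
         = - (LINT x:{s - h0..t + h0}|lborel. g x * plateau s t h x)"
proof -
  define J where "J = {s - h0..t + h0}"
  have JO: "J \<subseteq> Omega xm"
    using st by (auto simp: J_def Omega_def)
  have plateau_J: "plateau s t h x = 0" if "x \<notin> J" for x
    using that h st by (intro plateau_eq_0) (auto simp: J_def)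
  have rhs: "(LINT x:Omega xm|lborel. g x * plateau s t h x) = (LINT x:J|lborel. g x * plateau s t h x)"
    unfolding set_lebesgue_integral_def
    by (rule Bochner_Integration.integral_cong) (use JO plateau_J in \<open>auto simp: indicator_def\<close>)
  have "test_fun xm (plateau s t h)"
    using st h by (intro test_fun_plateau) auto
  then have "(LINT x:Omega xm|lborel. v x * deriv (plateau s t h) x) = - (LINT x:Omega xm|lborel. g x * plateau s t h x)"
    using wd unfolding weak_deriv_def by blast
  then show ?thesis
    using set_integral_times_deriv_plateau[OF vm ae wc st h] rhs unfolding J_def by simp
qed

text \<open>Test the weak derivative against plateaus shrinking to the indicator of \<open>[s, t]\<close>.\<close>
lemma weak_deriv_continuous_representative:
  fixes v g w :: "real \<Rightarrow> real"
  assumes wd: "weak_deriv xm v g"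
    and vm: "set_borel_measurable lborel (Omega xm) v"
    and ae: "AE x in lborel. x \<in> Omega xm \<longrightarrow> w x = v x"
    and wc: "continuous_on (Omega xm) w"
    and g: "\<And>a b. 0 < a \<Longrightarrow> b < xm \<Longrightarrow> set_integrable lborel {a..b} g"
    and st: "0 < s" "s \<le> t" "t < xm"
  shows "w t - w s = (LINT x:{s..t}|lborel. g x)"
proof -
  define h0 where "h0 = min s (xm - t) / 2"
  have h0: "0 < h0" "0 < s - h0" "t + h0 < xm"
    using st unfolding h0_def min_def by (auto simp: field_simps)
  let ?J = "{s - h0..t + h0}"
  define h where "h n = h0 / real (Suc n)" for n
  have h_pos: "0 < h n" and h_le: "h n \<le> h0" for n
    using h0 by (auto simp: h_def divide_le_eq)
  have "(\<lambda>n. h0 * inverse (real (Suc n))) \<longlonglongrightarrow> h0 * 0"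
    by (intro tendsto_mult tendsto_const LIMSEQ_inverse_real_of_nat)
  then have h_0: "h \<longlonglongrightarrow> 0"
    by (simp add: h_def[abs_def] divide_inverse)
  have wJ: "continuous_on ?J w"
    by (rule continuous_on_subset[OF wc]) (use h0 in \<open>auto simp: Omega_def\<close>)
  have gJ: "set_integrable lborel ?J g"
    using h0 by (auto intro: g)
  have "(\<lambda>n. integral ?J (\<lambda>x. w x * step_kernel s (h n) x)) \<longlonglongrightarrow> w s"
    using h_pos h_le h0 st by (intro tendsto_integral_times_step_kernel[OF h_0 _ _ _ _ wJ])
      (auto intro: less_imp_le)
  moreover have "(\<lambda>n. integral ?J (\<lambda>x. w x * step_kernel (t + h n) (h n) x)) \<longlonglongrightarrow> w t"
    using h_pos h_le h0 st by (intro tendsto_integral_times_step_kernel[OF h_0 _ _ _ _ wJ])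
      (auto intro: less_imp_le)
  ultimately have "(\<lambda>n. integral ?J (\<lambda>x. w x * step_kernel s (h n) x)
      - integral ?J (\<lambda>x. w x * step_kernel (t + h n) (h n) x)) \<longlonglongrightarrow> w s - w t"
    by (rule tendsto_diff)
  then have "(\<lambda>n. - (LINT x:?J|lborel. g x * plateau s t (h n) x)) \<longlonglongrightarrow> w s - w t"
    unfolding weak_deriv_plateau_identity[OF wd vm ae wc h0(2) st(2) h0(3) h_pos h_le] .
  moreover have "(\<lambda>n. - (LINT x:?J|lborel. g x * plateau s t (h n) x)) \<longlonglongrightarrow> - (LINT x:{s..t}|lborel. g x)"
    using st(2) h_0 h_pos h_le by (intro tendsto_minus tendsto_set_integral_times_plateau gJ)
  ultimately have "w s - w t = - (LINT x:{s..t}|lborel. g x)"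
    by (rule LIMSEQ_unique)
  then show ?thesis
    by simp
qed

section \<open>Integration by parts for primitives of integrable functions\<close>

lemma integral_product_split_diagonal:
  fixes F G :: "real \<Rightarrow> real"
  assumes F: "integrable lborel F" and G: "integrable lborel G"
  shows "integrable lborel (\<lambda>x. F x * (LINT y|lborel. indicator {..x} y * G y))"
    and "integrable lborel (\<lambda>y. (LINT x|lborel. indicator {..<y} x * F x) * G y)"
    and "(LINT x|lborel. F x * (LINT y|lborel. indicator {..x} y * G y))
         + (LINT y|lborel. (LINT x|lborel. indicator {..<y} x * F x) * G y)
         = (LINT x|lborel. F x) * (LINT y|lborel. G y)"
proof -
  have [measurable]: "F \<in> borel_measurable lborel" "G \<in> borel_measurable lborel"
    using F G by (auto intro: borel_measurable_integrable)
  define H where "H x y = F x * G y" for x y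
  define H1 where "H1 x y = (if y \<le> x then F x * G y else 0)" for x y
  define H2 where "H2 x y = (if x < y then F x * G y else 0)" for x y
  have [measurable]: "(\<lambda>(x, y). H x y) \<in> borel_measurable (lborel \<Otimes>\<^sub>M lborel)"
    "(\<lambda>(x, y). H1 x y) \<in> borel_measurable (lborel \<Otimes>\<^sub>M lborel)"
    "(\<lambda>(x, y). H2 x y) \<in> borel_measurable (lborel \<Otimes>\<^sub>M lborel)"
    unfolding H_def H1_def H2_def by measurable
  have H: "integrable (lborel \<Otimes>\<^sub>M lborel) (\<lambda>(x, y). H x y)"
  proof (rule lborel_pair.Fubini_integrable)
    have "integrable lborel (\<lambda>x. \<bar>F x\<bar> * (LINT y|lborel. \<bar>G y\<bar>))"
      using F by (intro integrable_mult_left integrable_abs)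
    then show "integrable lborel (\<lambda>x. LINT y|lborel. norm (case (x, y) of (x, y) \<Rightarrow> H x y))"
      by (simp add: H_def abs_mult)
    show "AE x in lborel. integrable lborel (\<lambda>y. case (x, y) of (x, y) \<Rightarrow> H x y)"
      using G by (simp add: H_def)
  qed simp
  have H1: "integrable (lborel \<Otimes>\<^sub>M lborel) (\<lambda>(x, y). H1 x y)"
    and H2: "integrable (lborel \<Otimes>\<^sub>M lborel) (\<lambda>(x, y). H2 x y)"
    by (auto intro: Bochner_Integration.integrable_bound[OF H] simp: H_def H1_def H2_def split: prod.splits)
  have inner1: "(LINT y|lborel. H1 x y) = F x * (LINT y|lborel. indicator {..x} y * G y)" for x
  proof -
    have "(\<lambda>y. H1 x y) = (\<lambda>y. F x * (indicator {..x} y * G y))"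
      by (auto simp: H1_def indicator_def fun_eq_iff)
    then show ?thesis
      by simp
  qed
  have inner2: "(LINT x|lborel. H2 x y) = (LINT x|lborel. indicator {..<y} x * F x) * G y" for y
  proof -
    have "(\<lambda>x. H2 x y) = (\<lambda>x. indicator {..<y} x * F x * G y)"
      by (auto simp: H2_def indicator_def fun_eq_iff)
    then show ?thesis
      by simp
  qed
  show "integrable lborel (\<lambda>x. F x * (LINT y|lborel. indicator {..x} y * G y))"
    using lborel_pair.integrable_fst[OF H1] by (simp add: inner1)
  show "integrable lborel (\<lambda>y. (LINT x|lborel. indicator {..<y} x * F x) * G y)"
    using lborel_pair.integrable_snd[OF H2] by (simp add: inner2)
  have "(\<lambda>(x, y). H x y) = (\<lambda>p. (\<lambda>(x, y). H1 x y) p + (\<lambda>(x, y). H2 x y) p)"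
    by (auto simp: H_def H1_def H2_def fun_eq_iff)
  then have "integral\<^sup>L (lborel \<Otimes>\<^sub>M lborel) (\<lambda>(x, y). H x y)
      = integral\<^sup>L (lborel \<Otimes>\<^sub>M lborel) (\<lambda>(x, y). H1 x y)
        + integral\<^sup>L (lborel \<Otimes>\<^sub>M lborel) (\<lambda>(x, y). H2 x y)"
    using Bochner_Integration.integral_add[OF H1 H2] by simp
  then show "(LINT x|lborel. F x * (LINT y|lborel. indicator {..x} y * G y))
         + (LINT y|lborel. (LINT x|lborel. indicator {..<y} x * F x) * G y)
         = (LINT x|lborel. F x) * (LINT y|lborel. G y)"
    using lborel_pair.integral_fst[OF H] lborel_pair.integral_fst[OF H1] lborel_pair.integral_snd[OF H2]
    by (simp add: inner1 inner2 H_def)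
qed

lemma set_integral_primitives_product:
  fixes f g :: "real \<Rightarrow> real"
  assumes f: "set_integrable lborel {a..b} f" and g: "set_integrable lborel {a..b} g"
  shows "set_integrable lborel {a..b} (\<lambda>x. f x * (LINT y:{a..x}|lborel. g y))"
    and "set_integrable lborel {a..b} (\<lambda>x. (LINT y:{a..x}|lborel. f y) * g x)"
    and "(LINT x:{a..b}|lborel. f x * (LINT y:{a..x}|lborel. g y))
         + (LINT x:{a..b}|lborel. (LINT y:{a..x}|lborel. f y) * g x)
         = (LINT x:{a..b}|lborel. f x) * (LINT x:{a..b}|lborel. g x)"
proof -
  define F where "F x = indicator {a..b} x * f x" for x
  define G where "G x = indicator {a..b} x * g x" for x
  have F: "integrable lborel F" and G: "integrable lborel G"
    using f g by (simp_all add: F_def[abs_def] G_def[abs_def] set_integrable_def)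
  have [measurable]: "F \<in> borel_measurable lborel"
    using F by (rule borel_measurable_integrable)
  have G_prim: "(LINT y|lborel. indicator {..x} y * G y) = (LINT y:{a..x}|lborel. g y)"
    if "x \<in> {a..b}" for x
    unfolding set_lebesgue_integral_def
    by (rule Bochner_Integration.integral_cong) (use that in \<open>auto simp: G_def indicator_def\<close>)
  have F_prim: "(LINT x|lborel. indicator {..<y} x * F x) = (LINT x:{a..y}|lborel. f x)"
    if "y \<in> {a..b}" for y
  proof -
    have "(LINT x|lborel. indicator {..<y} x * F x) = (LINT x|lborel. indicator {..y} x * F x)"
      by (rule integral_cong_AE)
        (use AE_lborel_singleton[of y] in \<open>auto elim!: eventually_mono simp: indicator_def\<close>)
    also have "\<dots> = (LINT x:{a..y}|lborel. f x)"
      unfolding set_lebesgue_integral_def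
      by (rule Bochner_Integration.integral_cong) (use that in \<open>auto simp: F_def indicator_def\<close>)
    finally show ?thesis .
  qed
  have eq1: "(\<lambda>x. F x * (LINT y|lborel. indicator {..x} y * G y))
      = (\<lambda>x. indicator {a..b} x *\<^sub>R (f x * (LINT y:{a..x}|lborel. g y)))"
  proof
    show "F x * (LINT y|lborel. indicator {..x} y * G y)
        = indicator {a..b} x *\<^sub>R (f x * (LINT y:{a..x}|lborel. g y))" for x
      by (cases "x \<in> {a..b}") (simp_all add: F_def G_prim)
  qed
  have eq2: "(\<lambda>y. (LINT x|lborel. indicator {..<y} x * F x) * G y)
      = (\<lambda>y. indicator {a..b} y *\<^sub>R ((LINT x:{a..y}|lborel. f x) * g y))"
  proof
    show "(LINT x|lborel. indicator {..<y} x * F x) * G y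
        = indicator {a..b} y *\<^sub>R ((LINT x:{a..y}|lborel. f x) * g y)" for y
      by (cases "y \<in> {a..b}") (simp_all add: G_def F_prim)
  qed
  note split = integral_product_split_diagonal[OF F G, unfolded eq1 eq2]
  show "set_integrable lborel {a..b} (\<lambda>x. f x * (LINT y:{a..x}|lborel. g y))"
    and "set_integrable lborel {a..b} (\<lambda>x. (LINT y:{a..x}|lborel. f y) * g x)"
    using split(1,2) by (simp_all add: set_integrable_def)
  show "(LINT x:{a..b}|lborel. f x * (LINT y:{a..x}|lborel. g y))
         + (LINT x:{a..b}|lborel. (LINT y:{a..x}|lborel. f y) * g x)
         = (LINT x:{a..b}|lborel. f x) * (LINT x:{a..b}|lborel. g x)"
    using split(3) by (simp add: set_lebesgue_integral_def F_def G_def)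
qed

lemma set_integrable_continuous_mult:
  fixes u g :: "real \<Rightarrow> real"
  assumes u: "continuous_on {a..b} u" and g: "set_integrable lborel {a..b} g"
  shows "set_integrable lborel {a..b} (\<lambda>x. u x * g x)"
proof -
  obtain B where B: "\<And>x. x \<in> {a..b} \<Longrightarrow> \<bar>u x\<bar> \<le> B"
    using compact_imp_bounded[OF compact_continuous_image[OF u compact_Icc]] bounded_real
    by (metis image_eqI)
  have "(\<lambda>x. indicator {a..b} x *\<^sub>R u x) \<in> borel_measurable borel"
    by (rule borel_measurable_continuous_on_indicator[OF _ u]) simp
  moreover have "(\<lambda>x. indicator {a..b} x *\<^sub>R g x) \<in> borel_measurable lborel"
    using g by (simp add: set_integrable_def borel_measurable_integrable)
  ultimately have "(\<lambda>x. (indicator {a..b} x *\<^sub>R u x) * (indicator {a..b} x *\<^sub>R g x)) \<in> borel_measurable lborel"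
    by measurable
  moreover have "(\<lambda>x. (indicator {a..b} x *\<^sub>R u x) * (indicator {a..b} x *\<^sub>R g x))
      = (\<lambda>x. indicator {a..b} x *\<^sub>R (u x * g x))"
    by (auto simp: fun_eq_iff indicator_def)
  ultimately have "set_borel_measurable lborel {a..b} (\<lambda>x. u x * g x)"
    by (simp add: set_borel_measurable_def)
  moreover have "AE x in lborel. x \<in> {a..b} \<longrightarrow> norm (u x * g x) \<le> norm (B * g x)"
  proof (intro AE_I2 impI)
    fix x
    assume "x \<in> {a..b}"
    then have "\<bar>u x\<bar> \<le> \<bar>B\<bar>"
      using B by force
    then show "norm (u x * g x) \<le> norm (B * g x)"
      by (simp add: abs_mult mult_right_mono)
  qed
  ultimately show ?thesis
    by (rule set_integrable_bound[OF set_integrable_mult_right[OF g, of B]])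
qed

lemma set_integral_self_times_deriv:
  fixes w g :: "real \<Rightarrow> real"
  assumes w: "continuous_on {a..c} w" and g: "set_integrable lborel {a..c} g"
    and prim: "\<And>x. x \<in> {a..c} \<Longrightarrow> w x - w a = (LINT y:{a..x}|lborel. g y)"
    and "a \<le> c"
  shows "(LINT x:{a..c}|lborel. w x * g x) = ((w c)\<^sup>2 - (w a)\<^sup>2) / 2"
proof -
  have wg: "set_integrable lborel {a..c} (\<lambda>x. w x * g x)"
    by (rule set_integrable_continuous_mult[OF w g])
  have prim': "(LINT y:{a..x}|lborel. g y) = w x - w a" if "x \<in> {a..c}" for x
    using prim[OF that] by simp
  have "(LINT x:{a..c}|lborel. g x * (LINT y:{a..x}|lborel. g y)) = (LINT x:{a..c}|lborel. (w x - w a) * g x)"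
    and "(LINT x:{a..c}|lborel. (LINT y:{a..x}|lborel. g y) * g x) = (LINT x:{a..c}|lborel. (w x - w a) * g x)"
    by (auto intro!: set_lebesgue_integral_cong simp: prim')
  moreover have "(LINT x:{a..c}|lborel. (w x - w a) * g x) = (LINT x:{a..c}|lborel. w x * g x) - w a * (w c - w a)"
    using set_integral_diff(2)[OF wg set_integrable_mult_right[OF g]] prim'[of c] \<open>a \<le> c\<close>
    by (simp add: left_diff_distrib)
  moreover have "(LINT y:{a..c}|lborel. g y) = w c - w a"
    using prim'[of c] \<open>a \<le> c\<close> by simp
  ultimately have "2 * ((LINT x:{a..c}|lborel. w x * g x) - w a * (w c - w a)) = (w c - w a) * (w c - w a)"
    using set_integral_primitives_product(3)[OF g g] by simp
  then show ?thesis
    by (simp add: algebra_simps power2_eq_square)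
qed

text \<open>The product rule is replaced by \<open>set_integral_primitives_product\<close> applied to \<open>w w'\<close> and \<open>1\<close>.\<close>
lemma set_integral_x_self_times_deriv:
  fixes w g :: "real \<Rightarrow> real"
  assumes w: "continuous_on {a..b} w" and g: "set_integrable lborel {a..b} g"
    and prim: "\<And>x. x \<in> {a..b} \<Longrightarrow> w x - w a = (LINT y:{a..x}|lborel. g y)"
    and "a \<le> b"
  shows "(LINT x:{a..b}|lborel. x * w x * g x)
    = (b * (w b)\<^sup>2 - a * (w a)\<^sup>2) / 2 - (LINT x:{a..b}|lborel. (w x)\<^sup>2) / 2"
proof -
  define f where "f x = w x * g x" for x
  have f: "set_integrable lborel {a..b} f"
    unfolding f_def by (rule set_integrable_continuous_mult[OF w g])
  have one: "set_integrable lborel {a..b} (\<lambda>_. 1 :: real)"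
    by (rule borel_integrable_atLeastAtMost') simp
  have length: "(LINT y:{a..x}|lborel. (1 :: real)) = x - a" if "a \<le> x" for x
    using that by (simp add: set_integral_const)
  have f_prim: "(LINT y:{a..x}|lborel. f y) = ((w x)\<^sup>2 - (w a)\<^sup>2) / 2" if "x \<in> {a..b}" for x
    unfolding f_def using that prim
    by (intro set_integral_self_times_deriv continuous_on_subset[OF w] set_integrable_subset[OF g]) auto
  have xf: "set_integrable lborel {a..b} (\<lambda>x. x * f x)"
    using set_integrable_continuous_mult[of a b "\<lambda>x. x * w x", OF _ g] w
    by (simp add: f_def mult.assoc continuous_intros)
  have w2: "set_integrable lborel {a..b} (\<lambda>x. (w x)\<^sup>2 / 2)"
    by (rule borel_integrable_atLeastAtMost') (auto intro!: continuous_intros w)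
  have "(LINT x:{a..b}|lborel. f x * (LINT y:{a..x}|lborel. (1 :: real)))
      = (LINT x:{a..b}|lborel. x * f x - a * f x)"
    by (rule set_lebesgue_integral_cong) (auto simp: length algebra_simps)
  also have "\<dots> = (LINT x:{a..b}|lborel. x * f x) - a * (((w b)\<^sup>2 - (w a)\<^sup>2) / 2)"
    using set_integral_diff(2)[OF xf set_integrable_mult_right[OF f]] f_prim[of b] \<open>a \<le> b\<close> by simp
  finally have part1: "(LINT x:{a..b}|lborel. f x * (LINT y:{a..x}|lborel. (1 :: real)))
      = (LINT x:{a..b}|lborel. x * f x) - a * (((w b)\<^sup>2 - (w a)\<^sup>2) / 2)" .
  have "(LINT x:{a..b}|lborel. (LINT y:{a..x}|lborel. f y) * 1)
      = (LINT x:{a..b}|lborel. (w x)\<^sup>2 / 2 - (w a)\<^sup>2 / 2)"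
    by (rule set_lebesgue_integral_cong) (auto simp: f_prim diff_divide_distrib)
  also have "\<dots> = (LINT x:{a..b}|lborel. (w x)\<^sup>2) / 2 - (w a)\<^sup>2 / 2 * (b - a)"
    using set_integral_diff(2)[OF w2 borel_integrable_atLeastAtMost'[of a b "\<lambda>_. (w a)\<^sup>2 / 2"]] \<open>a \<le> b\<close>
    by (simp add: set_integral_const)
  finally have part2: "(LINT x:{a..b}|lborel. (LINT y:{a..x}|lborel. f y) * 1)
      = (LINT x:{a..b}|lborel. (w x)\<^sup>2) / 2 - (w a)\<^sup>2 / 2 * (b - a)" .
  have "(LINT x:{a..b}|lborel. x * f x) - a * (((w b)\<^sup>2 - (w a)\<^sup>2) / 2)
      + ((LINT x:{a..b}|lborel. (w x)\<^sup>2) / 2 - (w a)\<^sup>2 / 2 * (b - a)) = ((w b)\<^sup>2 - (w a)\<^sup>2) / 2 * (b - a)"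
    using set_integral_primitives_product(3)[OF f one] part1 part2 f_prim[of b] length[of b] \<open>a \<le> b\<close>
    by simp
  then show ?thesis
    by (simp add: f_def mult.assoc field_simps)
qed

section \<open>Square integrable functions\<close>

lemma set_borel_measurable_mult:
  fixes f g :: "'a \<Rightarrow> real"
  assumes "set_borel_measurable M A f" "set_borel_measurable M A g"
  shows "set_borel_measurable M A (\<lambda>x. f x * g x)"
proof -
  have "(\<lambda>x. (indicator A x *\<^sub>R f x) * (indicator A x *\<^sub>R g x)) \<in> borel_measurable M"
    using assms unfolding set_borel_measurable_def by measurable
  moreover have "(\<lambda>x. (indicator A x *\<^sub>R f x) * (indicator A x *\<^sub>R g x)) = (\<lambda>x. indicator A x *\<^sub>R (f x * g x))"
    by (auto simp: fun_eq_iff indicator_def)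
  ultimately show ?thesis
    by (simp add: set_borel_measurable_def)
qed

lemma set_borel_measurable_id: "A \<in> sets borel \<Longrightarrow> set_borel_measurable lborel A (\<lambda>x :: real. x)"
  unfolding set_borel_measurable_def
  using borel_measurable_continuous_on_indicator[of A "\<lambda>x. x"] by simp

lemma set_borel_measurable_continuous_on_open:
  fixes w :: "real \<Rightarrow> real"
  assumes "open A" "continuous_on A w"
  shows "set_borel_measurable lborel A w"
  unfolding set_borel_measurable_def
  using borel_measurable_continuous_on_indicator[OF _ assms(2)] assms(1) by simp

lemma set_integral_cong_AE_set_borel_measurable:
  fixes f g :: "'a \<Rightarrow> real"
  assumes "set_borel_measurable M A f" "set_borel_measurable M A g"
    and "AE x in M. x \<in> A \<longrightarrow> f x = g x"
  shows "(LINT x:A|M. f x) = (LINT x:A|M. g x)"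
    and "set_integrable M A f \<longleftrightarrow> set_integrable M A g"
proof -
  have ae: "AE x in M. indicator A x *\<^sub>R f x = indicator A x *\<^sub>R g x"
    using assms(3) by eventually_elim (simp add: indicator_def)
  show "(LINT x:A|M. f x) = (LINT x:A|M. g x)"
    unfolding set_lebesgue_integral_def
    by (rule integral_cong_AE[OF assms(1,2)[unfolded set_borel_measurable_def] ae])
  show "set_integrable M A f \<longleftrightarrow> set_integrable M A g"
    unfolding set_integrable_def
    by (rule integrable_cong_AE[OF assms(1,2)[unfolded set_borel_measurable_def] ae])
qed

lemma set_integral_square_nonneg: "0 \<le> (LINT x:A|M. (f x :: real)\<^sup>2)"
  unfolding set_lebesgue_integral_def by (rule integral_nonneg_AE) (auto simp: indicator_def)

lemma set_integrable_mult_of_squares: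
  fixes p q :: "'a \<Rightarrow> real"
  assumes "set_borel_measurable M A p" "set_borel_measurable M A q"
    and "set_integrable M A (\<lambda>x. (p x)\<^sup>2)" "set_integrable M A (\<lambda>x. (q x)\<^sup>2)"
  shows "set_integrable M A (\<lambda>x. p x * q x)"
proof (rule set_integrable_bound[OF set_integral_add(1)[OF assms(3,4)]])
  show "set_borel_measurable M A (\<lambda>x. p x * q x)"
    by (rule set_borel_measurable_mult[OF assms(1,2)])
  have "\<bar>p x * q x\<bar> \<le> (p x)\<^sup>2 + (q x)\<^sup>2" for x
  proof -
    have "2 * (\<bar>p x\<bar> * \<bar>q x\<bar>) \<le> (p x)\<^sup>2 + (q x)\<^sup>2"
      using sum_squares_bound[of "\<bar>p x\<bar>" "\<bar>q x\<bar>"] by (simp add: mult.assoc)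
    moreover have "0 \<le> \<bar>p x\<bar> * \<bar>q x\<bar>"
      by simp
    ultimately show ?thesis
      unfolding abs_mult by linarith
  qed
  then show "AE x in M. x \<in> A \<longrightarrow> norm (p x * q x) \<le> norm ((p x)\<^sup>2 + (q x)\<^sup>2)"
    by auto
qed

lemma discriminant_le_of_quadratic_nonneg:
  fixes P Q R :: real
  assumes "P \<ge> 0" and nonneg: "\<And>l. 0 \<le> l\<^sup>2 * P + 2 * l * R + Q"
  shows "R\<^sup>2 \<le> P * Q"
proof (cases "P = 0")
  case True
  have "R = 0"
  proof (rule ccontr)
    assume "R \<noteq> 0"
    have "0 \<le> (- (Q + 1) / (2 * R))\<^sup>2 * P + 2 * (- (Q + 1) / (2 * R)) * R + Q"
      by (rule nonneg)
    also have "\<dots> = - 1"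
      using True \<open>R \<noteq> 0\<close> by (simp add: field_simps)
    finally show False
      by simp
  qed
  with True show ?thesis
    by simp
next
  case False
  with \<open>P \<ge> 0\<close> have "P > 0"
    by simp
  have "0 \<le> (- R / P)\<^sup>2 * P + 2 * (- R / P) * R + Q"
    by (rule nonneg)
  also have "\<dots> = Q - R\<^sup>2 / P"
    using \<open>P > 0\<close> by (simp add: field_simps power2_eq_square)
  finally show ?thesis
    using \<open>P > 0\<close> by (simp add: divide_le_eq mult.commute)
qed

lemma set_integral_Cauchy_Schwarz:
  fixes p q :: "'a \<Rightarrow> real"
  assumes A: "A \<in> sets M"
    and p: "set_borel_measurable M A p" "set_integrable M A (\<lambda>x. (p x)\<^sup>2)"
    and q: "set_borel_measurable M A q" "set_integrable M A (\<lambda>x. (q x)\<^sup>2)"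
  shows "\<bar>LINT x:A|M. p x * q x\<bar> \<le> sqrt (LINT x:A|M. (p x)\<^sup>2) * sqrt (LINT x:A|M. (q x)\<^sup>2)"
proof -
  define P where "P = (LINT x:A|M. (p x)\<^sup>2)"
  define Q where "Q = (LINT x:A|M. (q x)\<^sup>2)"
  define R where "R = (LINT x:A|M. p x * q x)"
  have pq: "set_integrable M A (\<lambda>x. p x * q x)"
    by (rule set_integrable_mult_of_squares[OF p(1) q(1) p(2) q(2)])
  have "R\<^sup>2 \<le> P * Q"
  proof (rule discriminant_le_of_quadratic_nonneg)
    show "P \<ge> 0"
      unfolding P_def by (rule set_integral_square_nonneg)
    fix l :: real
    have "(LINT x:A|M. (l * p x + q x)\<^sup>2) = (LINT x:A|M. l\<^sup>2 * (p x)\<^sup>2 + 2 * l * (p x * q x) + (q x)\<^sup>2)"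
      by (rule set_lebesgue_integral_cong[OF A]) (simp add: power2_eq_square algebra_simps)
    also have "\<dots> = l\<^sup>2 * P + 2 * l * R + Q"
      using p(2) q(2) pq by (simp add: P_def Q_def R_def)
    finally show "0 \<le> l\<^sup>2 * P + 2 * l * R + Q"
      using set_integral_square_nonneg[of M A "\<lambda>x. l * p x + q x"] by simp
  qed
  then have "sqrt (R\<^sup>2) \<le> sqrt (P * Q)"
    by (rule real_sqrt_le_mono)
  then show ?thesis
    by (simp add: P_def Q_def R_def real_sqrt_mult)
qed

lemma L2w_imp_L2_times_x:
  assumes "L2w xm g"
  shows "L2 xm (\<lambda>x. x * g x)"
proof -
  have "set_borel_measurable lborel (Omega xm) (\<lambda>x. x * g x)"
    using assms unfolding L2w_def
    by (intro set_borel_measurable_mult set_borel_measurable_id) (auto simp: Omega_def)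
  then show ?thesis
    using assms unfolding L2w_def L2_def by (simp add: power_mult_distrib)
qed

lemma L2w_imp_set_integrable_Icc:
  assumes g: "L2w xm g" and "0 < a" "b < xm"
  shows "set_integrable lborel {a..b} g"
proof -
  have sub: "{a..b} \<subseteq> Omega xm"
    using assms by (auto simp: Omega_def)
  have "set_integrable lborel {a..b} (\<lambda>x. x\<^sup>2 * (g x)\<^sup>2)"
    using g unfolding L2w_def by (intro set_integrable_subset[OF _ _ sub]) simp_all
  then have "set_integrable lborel {a..b} (\<lambda>x. 1 + x\<^sup>2 * (g x)\<^sup>2 / a\<^sup>2)"
    by (intro set_integral_add(1)[OF borel_integrable_atLeastAtMost']) simp_all
  moreover have "set_borel_measurable lborel {a..b} g"
    using g unfolding L2w_def by (intro set_borel_measurable_subset[OF _ _ sub]) simp_all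
  moreover have "norm (g x) \<le> norm (1 + x\<^sup>2 * (g x)\<^sup>2 / a\<^sup>2)" if "x \<in> {a..b}" for x
  proof -
    have "a\<^sup>2 \<le> x\<^sup>2"
      using that \<open>0 < a\<close> by (intro power_mono) auto
    then have "a\<^sup>2 * (g x)\<^sup>2 \<le> x\<^sup>2 * (g x)\<^sup>2"
      by (rule mult_right_mono) simp
    then have "(g x)\<^sup>2 \<le> x\<^sup>2 * (g x)\<^sup>2 / a\<^sup>2"
      using \<open>0 < a\<close> by (simp add: le_divide_eq mult.commute)
    moreover have "2 * \<bar>g x\<bar> \<le> (g x)\<^sup>2 + 1"
      using sum_squares_bound[of "\<bar>g x\<bar>" 1] by simp
    moreover have "0 \<le> \<bar>g x\<bar>"
      by simp
    ultimately have "\<bar>g x\<bar> \<le> 1 + x\<^sup>2 * (g x)\<^sup>2 / a\<^sup>2"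
      by linarith
    then show ?thesis
      by (simp add: abs_of_nonneg)
  qed
  then have "AE x in lborel. x \<in> {a..b} \<longrightarrow> norm (g x) \<le> norm (1 + x\<^sup>2 * (g x)\<^sup>2 / a\<^sup>2)"
    by simp
  ultimately show ?thesis
    by (rule set_integrable_bound)
qed

lemma tendsto_set_integral_Icc_exhaustion:
  fixes F :: "real \<Rightarrow> real"
  assumes F: "set_integrable lborel {lo<..<hi} F"
    and a: "a \<longlonglongrightarrow> lo" "\<And>n. lo < a n" and b: "b \<longlonglongrightarrow> hi" "\<And>n. b n < hi"
  shows "(\<lambda>n. LINT x:{a n..b n}|lborel. F x) \<longlonglongrightarrow> (LINT x:{lo<..<hi}|lborel. F x)"
proof -
  let ?F = "\<lambda>x. indicator {lo<..<hi} x * F x"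
  have FI: "integrable lborel ?F"
    using F by (simp add: set_integrable_def)
  have sub: "{a n..b n} \<subseteq> {lo<..<hi}" for n
    using a(2)[of n] b(2)[of n] by auto
  have eq: "indicator {a n..b n} x * F x = indicator {a n..b n} x * ?F x" for n x
    using sub[of n] by (auto simp: indicator_def)
  have "(\<lambda>n. LINT x|lborel. indicator {a n..b n} x * ?F x) \<longlonglongrightarrow> (LINT x|lborel. ?F x)"
  proof (rule integral_dominated_convergence[where w = "\<lambda>x. \<bar>?F x\<bar>"])
    show "?F \<in> borel_measurable lborel" "(\<lambda>x. indicator {a n..b n} x * ?F x) \<in> borel_measurable lborel" for n
      using borel_measurable_integrable[OF FI] by measurable
    show "integrable lborel (\<lambda>x. \<bar>?F x\<bar>)"
      using FI by (rule integrable_abs)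
    show "AE x in lborel. norm (indicator {a n..b n} x * ?F x) \<le> \<bar>?F x\<bar>" for n
      by (rule AE_I2) (auto simp: indicator_def)
    show "AE x in lborel. (\<lambda>n. indicator {a n..b n} x * ?F x) \<longlonglongrightarrow> ?F x"
    proof (rule AE_I2)
      fix x
      show "(\<lambda>n. indicator {a n..b n} x * ?F x) \<longlonglongrightarrow> ?F x"
      proof (cases "x \<in> {lo<..<hi}")
        case True
        have "\<forall>\<^sub>F n in sequentially. a n < x \<and> x < b n"
          using order_tendstoD(2)[OF a(1)] order_tendstoD(1)[OF b(1)] True by (auto intro: eventually_conj)
        then have "\<forall>\<^sub>F n in sequentially. indicator {a n..b n} x * ?F x = ?F x"
          by eventually_elim (auto simp: indicator_def)
        then show ?thesis
          by (rule tendsto_eventually)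
      next
        case False
        then show ?thesis
          using sub by (auto simp: indicator_def)
      qed
    qed
  qed
  then show ?thesis
    by (simp add: set_lebesgue_integral_def eq)
qed

section \<open>The bilinear form on the weighted Sobolev space\<close>

lemma H10w_continuous_representative:
  assumes "H10w xm v g"
  obtains w where "AE x in lborel. x \<in> Omega xm \<longrightarrow> w x = v x" "continuous_on (Omega xm) w"
    "(w \<longlongrightarrow> 0) (at_right 0)" "(w \<longlongrightarrow> 0) (at_left xm)"
    "\<And>s t. 0 < s \<Longrightarrow> s \<le> t \<Longrightarrow> t < xm \<Longrightarrow> w t - w s = (LINT x:{s..t}|lborel. g x)"
proof -
  from assms obtain w where ae: "AE x in lborel. x \<in> Omega xm \<longrightarrow> w x = v x"
    and w: "continuous_on (Omega xm) w" "(w \<longlongrightarrow> 0) (at_right 0)" "(w \<longlongrightarrow> 0) (at_left xm)"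
    unfolding H10w_def by blast
  have "w t - w s = (LINT x:{s..t}|lborel. g x)" if "0 < s" "s \<le> t" "t < xm" for s t
    using assms that unfolding H10w_def H1w_def L2_def
    by (intro weak_deriv_continuous_representative[OF _ _ ae w(1)] L2w_imp_set_integrable_Icc) auto
  with ae w that show ?thesis
    by blast
qed

lemma set_integral_times_x_deriv_vanishing_ends:
  fixes w g :: "real \<Rightarrow> real"
  assumes "xm > 0"
    and w: "continuous_on {0<..<xm} w" "(w \<longlongrightarrow> 0) (at_right 0)" "(w \<longlongrightarrow> 0) (at_left xm)"
    and g: "\<And>a b. 0 < a \<Longrightarrow> b < xm \<Longrightarrow> set_integrable lborel {a..b} g"
    and prim: "\<And>s t. 0 < s \<Longrightarrow> s \<le> t \<Longrightarrow> t < xm \<Longrightarrow> w t - w s = (LINT x:{s..t}|lborel. g x)"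
    and int: "set_integrable lborel {0<..<xm} (\<lambda>x. w x * (x * g x))"
      "set_integrable lborel {0<..<xm} (\<lambda>x. (w x)\<^sup>2)"
  shows "(LINT x:{0<..<xm}|lborel. w x * (x * g x)) = - (LINT x:{0<..<xm}|lborel. (w x)\<^sup>2) / 2"
proof -
  define a where "a n = xm / 3 * inverse (real (Suc n))" for n
  define b where "b n = xm - a n" for n
  have a_pos: "0 < a n" and a_le: "a n \<le> b n" and b_less: "b n < xm" for n
    using \<open>xm > 0\<close> by (auto simp: a_def b_def field_simps)
  have "a \<longlonglongrightarrow> xm / 3 * 0"
    unfolding a_def by (intro tendsto_mult tendsto_const LIMSEQ_inverse_real_of_nat)
  then have a0: "a \<longlonglongrightarrow> 0"
    by simp
  then have b1: "b \<longlonglongrightarrow> xm"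
    using tendsto_diff[OF tendsto_const a0, of xm] by (simp add: b_def[abs_def])
  have "\<forall>\<^sub>F n in sequentially. a n \<in> {0<..} \<and> a n \<noteq> 0"
    "\<forall>\<^sub>F n in sequentially. b n \<in> {..<xm} \<and> b n \<noteq> xm"
    using a_pos b_less by (auto intro!: always_eventually simp: less_imp_neq dual_order.strict_implies_not_eq)
  then have "filterlim a (at_right 0) sequentially" "filterlim b (at_left xm) sequentially"
    using a0 b1 by (auto simp: filterlim_at)
  then have wa: "(\<lambda>n. w (a n)) \<longlonglongrightarrow> 0" and wb: "(\<lambda>n. w (b n)) \<longlonglongrightarrow> 0"
    using filterlim_compose w(2,3) by blast+
  have interval: "(LINT x:{a n..b n}|lborel. w x * (x * g x))
      = (b n * (w (b n))\<^sup>2 - a n * (w (a n))\<^sup>2) / 2 - (LINT x:{a n..b n}|lborel. (w x)\<^sup>2) / 2" for n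
  proof -
    have sub: "{a n..b n} \<subseteq> {0<..<xm}"
      using a_pos[of n] b_less[of n] by auto
    have "(LINT x:{a n..b n}|lborel. x * w x * g x)
        = (b n * (w (b n))\<^sup>2 - a n * (w (a n))\<^sup>2) / 2 - (LINT x:{a n..b n}|lborel. (w x)\<^sup>2) / 2"
      using a_pos[of n] b_less[of n] a_le[of n]
      by (intro set_integral_x_self_times_deriv continuous_on_subset[OF w(1) sub] g prim) auto
    then show ?thesis
      by (simp add: mult_ac)
  qed
  have "(\<lambda>n. (b n * (w (b n))\<^sup>2 - a n * (w (a n))\<^sup>2) / 2 - (LINT x:{a n..b n}|lborel. (w x)\<^sup>2) / 2)
      \<longlonglongrightarrow> (xm * 0\<^sup>2 - 0 * 0\<^sup>2) / 2 - (LINT x:{0<..<xm}|lborel. (w x)\<^sup>2) / 2"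
    by (intro tendsto_intros a0 b1 wa wb tendsto_set_integral_Icc_exhaustion int a_pos b_less) simp_all
  moreover have "(\<lambda>n. LINT x:{a n..b n}|lborel. w x * (x * g x)) \<longlonglongrightarrow> (LINT x:{0<..<xm}|lborel. w x * (x * g x))"
    by (intro tendsto_set_integral_Icc_exhaustion int a0 b1 a_pos b_less)
  ultimately show ?thesis
    unfolding interval using LIMSEQ_unique by fastforce
qed

lemma H10w_integral_times_x_deriv:
  assumes "xm > 0" and H: "H10w xm v g"
  shows "(LINT x:Omega xm|lborel. v x * (x * g x)) = - (LINT x:Omega xm|lborel. (v x)\<^sup>2) / 2"
proof -
  obtain w where ae: "AE x in lborel. x \<in> Omega xm \<longrightarrow> w x = v x" and w: "continuous_on (Omega xm) w"
    "(w \<longlongrightarrow> 0) (at_right 0)" "(w \<longlongrightarrow> 0) (at_left xm)"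
    and prim: "\<And>s t. 0 < s \<Longrightarrow> s \<le> t \<Longrightarrow> t < xm \<Longrightarrow> w t - w s = (LINT x:{s..t}|lborel. g x)"
    using H by (rule H10w_continuous_representative) blast
  have v: "L2 xm v" and xg: "L2 xm (\<lambda>x. x * g x)" and "L2w xm g"
    using H L2w_imp_L2_times_x unfolding H10w_def H1w_def by auto
  have "set_borel_measurable lborel (Omega xm) w"
    using w by (intro set_borel_measurable_continuous_on_open) (simp_all add: Omega_def)
  then have meas: "set_borel_measurable lborel (Omega xm) (\<lambda>x. w x * (x * g x))"
    "set_borel_measurable lborel (Omega xm) (\<lambda>x. v x * (x * g x))"
    "set_borel_measurable lborel (Omega xm) (\<lambda>x. (w x)\<^sup>2)"
    "set_borel_measurable lborel (Omega xm) (\<lambda>x. (v x)\<^sup>2)"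
    using v xg unfolding L2_def power2_eq_square by (auto intro: set_borel_measurable_mult)
  have "AE x in lborel. x \<in> Omega xm \<longrightarrow> w x * (x * g x) = v x * (x * g x)"
    "AE x in lborel. x \<in> Omega xm \<longrightarrow> (w x)\<^sup>2 = (v x)\<^sup>2"
    using ae by auto
  note cong_prod = set_integral_cong_AE_set_borel_measurable[OF meas(1,2) this(1)]
    and cong_sq = set_integral_cong_AE_set_borel_measurable[OF meas(3,4) this(2)]
  have "set_integrable lborel (Omega xm) (\<lambda>x. v x * (x * g x))"
    using v xg unfolding L2_def by (intro set_integrable_mult_of_squares) auto
  then have "(LINT x:Omega xm|lborel. w x * (x * g x)) = - (LINT x:Omega xm|lborel. (w x)\<^sup>2) / 2"
    using cong_prod(2) cong_sq(2) v w prim L2w_imp_set_integrable_Icc[OF \<open>L2w xm g\<close>] \<open>xm > 0\<close>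
    unfolding L2_def Omega_def by (intro set_integral_times_x_deriv_vanishing_ends) auto
  then show ?thesis
    using cong_prod(1) cong_sq(1) by simp
qed

lemma sqrt_le_norm1w:
  shows "sqrt (LINT x:Omega xm|lborel. (v x)\<^sup>2) \<le> norm1w xm v g"
    and "sqrt (LINT x:Omega xm|lborel. (x * g x)\<^sup>2) \<le> norm1w xm v g"
  using set_integral_square_nonneg[of lborel "Omega xm" v]
    set_integral_square_nonneg[of lborel "Omega xm" "\<lambda>x. x * g x"]
  by (auto simp: norm1w_def power_mult_distrib)

lemma norm1w_nonneg: "0 \<le> norm1w xm v g"
  using real_sqrt_ge_zero[OF set_integral_square_nonneg] sqrt_le_norm1w(1) by (rule order_trans)

lemma L2_Cauchy_Schwarz:
  assumes "L2 xm p" "L2 xm q"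
  shows "\<bar>LINT x:Omega xm|lborel. p x * q x\<bar>
    \<le> sqrt (LINT x:Omega xm|lborel. (p x)\<^sup>2) * sqrt (LINT x:Omega xm|lborel. (q x)\<^sup>2)"
  using assms unfolding L2_def by (intro set_integral_Cauchy_Schwarz) (auto simp: Omega_def)

lemma H10w_form_eq:
  assumes "H10w xm z gz" "H10w xm v gv"
  shows "(LINT x:Omega xm|lborel. (a * x\<^sup>2 * gz x + b * x * z x) * gv x) + (LINT x:Omega xm|lborel. c * z x * v x)
    = a * (LINT x:Omega xm|lborel. (x * gz x) * (x * gv x)) + b * (LINT x:Omega xm|lborel. z x * (x * gv x))
      + c * (LINT x:Omega xm|lborel. z x * v x)"
proof -
  have "L2 xm z" "L2 xm (\<lambda>x. x * gz x)" "L2 xm (\<lambda>x. x * gv x)"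
    using assms L2w_imp_L2_times_x unfolding H10w_def H1w_def by auto
  then have "set_integrable lborel (Omega xm) (\<lambda>x. a * ((x * gz x) * (x * gv x)))"
    "set_integrable lborel (Omega xm) (\<lambda>x. b * (z x * (x * gv x)))"
    unfolding L2_def by (auto intro!: set_integrable_mult_right set_integrable_mult_of_squares)
  moreover have "(LINT x:Omega xm|lborel. (a * x\<^sup>2 * gz x + b * x * z x) * gv x)
      = (LINT x:Omega xm|lborel. a * ((x * gz x) * (x * gv x)) + b * (z x * (x * gv x)))"
    by (rule set_lebesgue_integral_cong) (auto simp: Omega_def power2_eq_square algebra_simps)
  ultimately show ?thesis
    by (simp add: mult.assoc)
qed

lemma H10w_form_coercive:
  assumes "xm > 0" "H10w xm v g" "C \<le> a" "C \<le> c - b / 2"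
  shows "C * (norm1w xm v g)\<^sup>2 \<le> a * (LINT x:Omega xm|lborel. (x * g x) * (x * g x))
    + b * (LINT x:Omega xm|lborel. v x * (x * g x)) + c * (LINT x:Omega xm|lborel. v x * v x)"
proof -
  define X where "X = (LINT x:Omega xm|lborel. (x * g x)\<^sup>2)"
  define Y where "Y = (LINT x:Omega xm|lborel. (v x)\<^sup>2)"
  have "X \<ge> 0" "Y \<ge> 0"
    unfolding X_def Y_def by (rule set_integral_square_nonneg)+
  have "(norm1w xm v g)\<^sup>2 = Y + X"
    using \<open>X \<ge> 0\<close> \<open>Y \<ge> 0\<close> by (simp add: norm1w_def X_def Y_def power_mult_distrib)
  moreover have "C * X \<le> a * X" "C * Y \<le> (c - b / 2) * Y"
    using assms(3,4) \<open>X \<ge> 0\<close> \<open>Y \<ge> 0\<close> by (auto intro: mult_right_mono)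
  ultimately have "C * (norm1w xm v g)\<^sup>2 \<le> a * X + (c - b / 2) * Y"
    by (simp add: distrib_left)
  also have "\<dots> = a * (LINT x:Omega xm|lborel. (x * g x) * (x * g x))
      + b * (LINT x:Omega xm|lborel. v x * (x * g x)) + c * (LINT x:Omega xm|lborel. v x * v x)"
    using H10w_integral_times_x_deriv[OF assms(1,2)]
    by (simp add: X_def Y_def power2_eq_square algebra_simps)
  finally show ?thesis .
qed

lemma H10w_form_bounded:
  assumes "H10w xm z gz" "H10w xm v gv" "\<bar>a\<bar> + \<bar>b\<bar> + \<bar>c\<bar> \<le> M"
  shows "a * (LINT x:Omega xm|lborel. (x * gz x) * (x * gv x)) + b * (LINT x:Omega xm|lborel. z x * (x * gv x))
      + c * (LINT x:Omega xm|lborel. z x * v x) \<le> M * norm1w xm z gz * norm1w xm v gv"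
proof -
  define N where "N = norm1w xm z gz * norm1w xm v gv"
  have L2: "L2 xm z" "L2 xm (\<lambda>x. x * gz x)" "L2 xm v" "L2 xm (\<lambda>x. x * gv x)"
    using assms(1,2) L2w_imp_L2_times_x unfolding H10w_def H1w_def by auto
  have bound: "\<bar>LINT x:Omega xm|lborel. p x * q x\<bar> \<le> N"
    if "L2 xm p" "L2 xm q" "sqrt (LINT x:Omega xm|lborel. (p x)\<^sup>2) \<le> norm1w xm z gz"
      "sqrt (LINT x:Omega xm|lborel. (q x)\<^sup>2) \<le> norm1w xm v gv" for p q
  proof -
    have "0 \<le> norm1w xm z gz"
      by (rule norm1w_nonneg)
    moreover have "0 \<le> sqrt (LINT x:Omega xm|lborel. (q x)\<^sup>2)"
      by (simp add: set_integral_square_nonneg)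
    ultimately have "sqrt (LINT x:Omega xm|lborel. (p x)\<^sup>2) * sqrt (LINT x:Omega xm|lborel. (q x)\<^sup>2) \<le> N"
      unfolding N_def by (rule mult_mono[OF that(3,4)])
    then show ?thesis
      using L2_Cauchy_Schwarz[OF that(1,2)] by linarith
  qed
  have scaled_le: "u * P \<le> \<bar>u\<bar> * N" if "\<bar>P\<bar> \<le> N" for u P :: real
  proof -
    have "u * P \<le> \<bar>u\<bar> * \<bar>P\<bar>"
      by (metis abs_ge_self abs_mult)
    also have "\<dots> \<le> \<bar>u\<bar> * N"
      using that by (rule mult_left_mono) simp
    finally show ?thesis .
  qed
  have "a * (LINT x:Omega xm|lborel. (x * gz x) * (x * gv x)) + b * (LINT x:Omega xm|lborel. z x * (x * gv x))
      + c * (LINT x:Omega xm|lborel. z x * v x) \<le> \<bar>a\<bar> * N + \<bar>b\<bar> * N + \<bar>c\<bar> * N"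
    using bound[OF L2(2,4)] bound[OF L2(1,4)] bound[OF L2(1,3)] sqrt_le_norm1w
    by (intro add_mono scaled_le) auto
  also have "\<dots> \<le> M * N"
    using assms(3) norm1w_nonneg[of xm z gz] norm1w_nonneg[of xm v gv]
    by (simp add: N_def mult_right_mono flip: distrib_right)
  finally show ?thesis
    by (simp add: N_def mult.assoc)
qed

lemma bilinA_eq:
  assumes "H10w xm z gz" "H10w xm v gv"
  shows "bilinA xm r \<sigma> T t z gz v gv
    = (\<sigma> t)\<^sup>2 / 2 * (LINT x:Omega xm|lborel. (x * gz x) * (x * gv x))
      + (r t - (\<sigma> t)\<^sup>2) * (LINT x:Omega xm|lborel. z x * (x * gv x))
      + (2 * r t + (SUP s\<in>{0..T}. (\<sigma> s)\<^sup>2) - (\<sigma> t)\<^sup>2) * (LINT x:Omega xm|lborel. z x * v x)"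
  unfolding bilinA_def Let_def by (rule H10w_form_eq[OF assms])

lemma SUP_square_bounds:
  fixes \<sigma> :: "real \<Rightarrow> real"
  assumes "\<forall>s\<in>{0..T}. slo \<le> \<sigma> s \<and> \<sigma> s \<le> shi" "slo \<ge> 0" "t \<in> {0..T}"
  shows "slo\<^sup>2 \<le> (\<sigma> t)\<^sup>2" "(\<sigma> t)\<^sup>2 \<le> (SUP s\<in>{0..T}. (\<sigma> s)\<^sup>2)" "(SUP s\<in>{0..T}. (\<sigma> s)\<^sup>2) \<le> shi\<^sup>2"
proof -
  have sq: "slo\<^sup>2 \<le> (\<sigma> s)\<^sup>2 \<and> (\<sigma> s)\<^sup>2 \<le> shi\<^sup>2" if "s \<in> {0..T}" for s
  proof -
    have "0 \<le> slo" "slo \<le> \<sigma> s" "\<sigma> s \<le> shi"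
      using assms(1,2) that by auto
    then show ?thesis
      by (auto intro: power_mono)
  qed
  then show "slo\<^sup>2 \<le> (\<sigma> t)\<^sup>2"
    using assms(3) by blast
  show "(\<sigma> t)\<^sup>2 \<le> (SUP s\<in>{0..T}. (\<sigma> s)\<^sup>2)"
    using sq assms(3) by (intro cSUP_upper bdd_aboveI2) auto
  show "(SUP s\<in>{0..T}. (\<sigma> s)\<^sup>2) \<le> shi\<^sup>2"
    using sq assms(3) by (intro cSUP_least) auto
qed

lemma bilinA_coercive:
  assumes "xm > 0" "H10w xm v g" "t \<in> {0..T}" "0 \<le> r t"
    and "\<forall>s\<in>{0..T}. slo \<le> \<sigma> s \<and> \<sigma> s \<le> shi" "slo \<ge> 0"
  shows "slo\<^sup>2 / 2 * (norm1w xm v g)\<^sup>2 \<le> bilinA xm r \<sigma> T t v g v g"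
proof -
  note \<sigma> = SUP_square_bounds[OF assms(5,6,3)]
  have "slo\<^sup>2 / 2 \<le> (\<sigma> t)\<^sup>2 / 2"
    using \<sigma> by linarith
  moreover have "slo\<^sup>2 / 2 \<le> 2 * r t + (SUP s\<in>{0..T}. (\<sigma> s)\<^sup>2) - (\<sigma> t)\<^sup>2 - (r t - (\<sigma> t)\<^sup>2) / 2"
    using \<sigma> \<open>0 \<le> r t\<close> unfolding diff_divide_distrib by linarith
  ultimately show ?thesis
    unfolding bilinA_eq[OF assms(2,2)] by (rule H10w_form_coercive[OF assms(1,2)])
qed

lemma bilinA_bounded:
  assumes "H10w xm z gz" "H10w xm v gv" "t \<in> {0..T}" "0 \<le> r t" "r t \<le> rbar"
    and "\<forall>s\<in>{0..T}. slo \<le> \<sigma> s \<and> \<sigma> s \<le> shi" "slo \<ge> 0"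
  shows "bilinA xm r \<sigma> T t z gz v gv
    \<le> (shi\<^sup>2 / 2 + (rbar + shi\<^sup>2) + (2 * rbar + shi\<^sup>2)) * norm1w xm z gz * norm1w xm v gv"
proof -
  note bounds = SUP_square_bounds[OF assms(6,7,3)] assms(4,5) zero_le_power2[of "\<sigma> t"]
  have "\<bar>(\<sigma> t)\<^sup>2 / 2\<bar> \<le> shi\<^sup>2 / 2"
    by (intro abs_leI; use bounds in linarith)
  moreover have "\<bar>r t - (\<sigma> t)\<^sup>2\<bar> \<le> rbar + shi\<^sup>2"
    by (intro abs_leI; use bounds in linarith)
  moreover have "\<bar>2 * r t + (SUP s\<in>{0..T}. (\<sigma> s)\<^sup>2) - (\<sigma> t)\<^sup>2\<bar> \<le> 2 * rbar + shi\<^sup>2"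
    by (intro abs_leI; use bounds in linarith)
  ultimately show ?thesis
    unfolding bilinA_eq[OF assms(1,2)] by (intro H10w_form_bounded[OF assms(1,2)]) linarith
qed

theorem mainTheorem1:
  fixes xmax T rbar slo shi :: real and r \<sigma> :: "real \<Rightarrow> real"
  assumes "xmax > 0" and "T > 0"
    and "continuous_on {0..T} r" and "continuous_on {0..T} \<sigma>"
    and "\<forall>t\<in>{0..T}. 0 \<le> r t \<and> r t \<le> rbar"
    and "\<forall>t\<in>{0..T}. slo \<le> \<sigma> t \<and> \<sigma> t \<le> shi"
    and "slo > 0"
  shows "\<exists>C>0. \<exists>M>0. \<forall>t\<in>{0..T}. \<forall>v gv z gz.
           H10w xmax v gv \<longrightarrow> H10w xmax z gz \<longrightarrow>
             bilinA xmax r \<sigma> T t v gv v gv \<ge> C * (norm1w xmax v gv)^2 \<and>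
             bilinA xmax r \<sigma> T t z gz v gv \<le> M * norm1w xmax z gz * norm1w xmax v gv"
proof -
  define C where "C = slo\<^sup>2 / 2"
  define M where "M = shi\<^sup>2 / 2 + (rbar + shi\<^sup>2) + (2 * rbar + shi\<^sup>2)"
  have "0 \<le> rbar" "0 < shi"
    using assms(2,5,6,7) by force+
  then have "C > 0" "M > 0"
    using assms(7) by (simp_all add: C_def M_def add_nonneg_pos)
  moreover have "C * (norm1w xmax v gv)\<^sup>2 \<le> bilinA xmax r \<sigma> T t v gv v gv"
    if "t \<in> {0..T}" "H10w xmax v gv" for t v gv
    unfolding C_def by (rule bilinA_coercive[OF assms(1) that(2,1) _ assms(6)]) (use that assms(5,7) in auto)
  moreover have "bilinA xmax r \<sigma> T t z gz v gv \<le> M * norm1w xmax z gz * norm1w xmax v gv"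
    if "t \<in> {0..T}" "H10w xmax z gz" "H10w xmax v gv" for t v gv z gz
    unfolding M_def by (rule bilinA_bounded[OF that(2,3,1) _ _ assms(6)]) (use that assms(5,7) in auto)
  ultimately show ?thesis
    by blast
qed

end
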